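(* Let $1\le p<\infty$ and let $\rho=\{\rho_x\}_{x\in\mathbb{R}^n}$ be a family of norms on $\mathbb{C}^d$ such that for every $x\in\mathbb{R}^n$ there is a positive-definite self-adjoint matrix $W_x$ with $\rho_x(\mathbf{v})\le|W_x\mathbf{v}|\le d^{1/2}\rho_x(\mathbf{v})$ for all $\mathbf{v}\in\mathbb{C}^d$, where $x\mapsto W_x$ is an invertible matrix weight and $\|W_x\|_{op}^p\in L^1_{\rm loc}(\mathbb{R}^n)$. A subset $\mathcal{F}\subset L^p(\rho)$ is totally bounded if: (a) $\sup_{\mathbf{f}\in\mathcal{F}}\|\mathbf{f}\|_{L^p(\rho)}<\infty$; (b) $\lim_{R\to\infty}\sup_{\mathbf{f}\in\mathcal{F}}\|\mathbf{f}\chi_{B^c(0,R)}\|_{L^p(\rho)}=0$; (c) $\lim_{r\to0}\sup_{\mathbf{f}\in\mathcal{F}}\sup_{y\in B(0,r)}\|\tau_y\mathbf{f}-\mathbf{f}\|_{L^p(\rho)}=0$, where $\tau_y\mathbf{f}(x)=\mathbf{f}(x-y)$.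
   Context: Lebesgue measure on $\mathbb{R}^n$. It is assumed that $x\mapsto\rho_x(\mathbf{f}(x))$ is measurable for every measurable $\mathbf{f}:\mathbb{R}^n\to\mathbb{C}^d$. $L^p(\rho)$ consists of measurable $\mathbf{f}:\mathbb{R}^n\to\mathbb{C}^d$ with $\|\mathbf{f}\|_{L^p(\rho)}^p:=\int_{\mathbb{R}^n}[\rho_x(\mathbf{f}(x))]^pdx<\infty$. A matrix weight is a measurable map $W:\mathbb{R}^n\to\mathcal{S}_d$ (self-adjoint non-negative-definite complex $d\times d$ matrices) with $\|W\|_{op}\in L^1_{\rm loc}(\mathbb{R}^n)$; invertible means $\det W(x)\neq0$ a.e. *)

theory Defs
  imports "HOL-Analysis.Analysis"
begin

definition is_cnorm :: "(complex^'d \<Rightarrow> real) \<Rightarrow> bool" where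
  "is_cnorm N \<longleftrightarrow>
     (\<forall>v. N v = 0 \<longleftrightarrow> v = 0) \<and>
     (\<forall>c v. N (c *s v) = cmod c * N v) \<and>
     (\<forall>u v. N (u + v) \<le> N u + N v)"

definition conj_transpose :: "complex^'n^'m \<Rightarrow> complex^'m^'n" where
  "conj_transpose A = (\<chi> i j. cnj (A $ j $ i))"

definition self_adjoint :: "complex^'n^'n \<Rightarrow> bool" where
  "self_adjoint A \<longleftrightarrow> conj_transpose A = A"

definition cinner :: "complex^'n \<Rightarrow> complex^'n \<Rightarrow> complex" where
  "cinner u v = (\<Sum>i\<in>UNIV. cnj (u $ i) * v $ i)"

definition pos_def_sa :: "complex^'n^'n \<Rightarrow> bool" where
  "pos_def_sa A \<longleftrightarrow> self_adjoint A \<and> (\<forall>v. v \<noteq> 0 \<longrightarrow> 0 < Re (cinner v (A *v v)))"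

definition op_norm :: "complex^'n^'m \<Rightarrow> real" where
  "op_norm A = onorm (\<lambda>v. A *v v)"

definition loc_integrable :: "('a::euclidean_space \<Rightarrow> real) \<Rightarrow> bool" where
  "loc_integrable g \<longleftrightarrow> (\<forall>K. compact K \<longrightarrow> set_integrable lebesgue K g)"

definition matrix_weight :: "('a::euclidean_space \<Rightarrow> complex^'d^'d) \<Rightarrow> bool" where
  "matrix_weight W \<longleftrightarrow>
     (\<forall>i j. (\<lambda>x. W x $ i $ j) \<in> borel_measurable lebesgue) \<and>
     (\<forall>x. self_adjoint (W x) \<and> (\<forall>v. 0 \<le> Re (cinner v (W x *v v)))) \<and>
     loc_integrable (\<lambda>x. op_norm (W x))"

definition invertible_matrix_weight :: "('a::euclidean_space \<Rightarrow> complex^'d^'d) \<Rightarrow> bool" where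
  "invertible_matrix_weight W \<longleftrightarrow> matrix_weight W \<and> (AE x in lebesgue. det (W x) \<noteq> 0)"

definition Lp_rho :: "real \<Rightarrow> ('a::euclidean_space \<Rightarrow> complex^'d \<Rightarrow> real) \<Rightarrow> ('a \<Rightarrow> complex^'d) set" where
  "Lp_rho p \<rho> = {f. f \<in> borel_measurable lebesgue \<and>
      (\<integral>\<^sup>+ x. ennreal (\<rho> x (f x) powr p) \<partial>lebesgue) < \<infinity>}"

definition Lp_rho_norm :: "real \<Rightarrow> ('a::euclidean_space \<Rightarrow> complex^'d \<Rightarrow> real) \<Rightarrow> ('a \<Rightarrow> complex^'d) \<Rightarrow> ennreal" where
  "Lp_rho_norm p \<rho> f =
     (let I = (\<integral>\<^sup>+ x. ennreal (\<rho> x (f x) powr p) \<partial>lebesgue)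
      in if I = \<infinity> then \<infinity> else ennreal (enn2real I powr (1 / p)))"

definition transl :: "'a::ab_group_add \<Rightarrow> ('a \<Rightarrow> 'b) \<Rightarrow> 'a \<Rightarrow> 'b" where
  "transl y f = (\<lambda>x. f (x - y))"

definition totally_bounded_Lp_rho :: "real \<Rightarrow> ('a::euclidean_space \<Rightarrow> complex^'d \<Rightarrow> real) \<Rightarrow> ('a \<Rightarrow> complex^'d) set \<Rightarrow> bool" where
  "totally_bounded_Lp_rho p \<rho> F \<longleftrightarrow>
     (\<forall>e>0. \<exists>K. finite K \<and> K \<subseteq> Lp_rho p \<rho> \<and>
        (\<forall>f\<in>F. \<exists>g\<in>K. Lp_rho_norm p \<rho> (\<lambda>x. f x - g x) < ennreal e))"

end

theory Submission
  imports Defs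
begin

text \<open>
  Since \<open>\<rho>\<^sub>x(v)\<close> and \<open>|W\<^sub>x v|\<close> are comparable, it suffices to find finite nets for the weighted integral
  \<open>\<integral> |W' h|^p\<close>, where \<open>W'\<close> is a Borel version of \<open>W\<close>. This is a Kolmogorov--Riesz argument: cut off the
  tails outside a large ball, split the ball into cubes of side \<open>\<delta>\<close> small against the modulus of translation,
  and replace each function by its cell averages rounded to a fine lattice. By Jensen's inequality and Fubini's
  theorem the averaging error is controlled by the modulus of translation. As \<open>W\<close> is a.e. invertible, it is
  coercive on every cell; this makes the functions integrable on cells and bounds their averages uniformly, so
  only finitely many rounded step functions occur. The rounding error is controlled by the integral of
  \<open>|W|^p\<close> over a cube.
\<close>

section \<open>Measurability and translation invariance\<close>

lemma borel_measurable_vec_nth [measurable (raw)]: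
  fixes f :: "'a \<Rightarrow> 'b::euclidean_space^'m"
  assumes "f \<in> borel_measurable M"
  shows "(\<lambda>x. f x $ i) \<in> borel_measurable M"
proof -
  have "(\<lambda>v::'b^'m. v $ i) \<in> borel_measurable borel"
    by (intro borel_measurable_continuous_onI continuous_intros)
  then show ?thesis
    using measurable_compose[OF assms] by blast
qed

lemma borel_measurable_vecI:
  fixes f :: "'a \<Rightarrow> 'b::euclidean_space^'m"
  assumes "\<And>i. (\<lambda>x. f x $ i) \<in> borel_measurable M"
  shows "f \<in> borel_measurable M"
proof (subst borel_measurable_euclidean_space, intro ballI)
  fix b :: "'b^'m"
  assume "b \<in> Basis"
  then obtain i u where b: "b = axis i u" "u \<in> Basis"
    by (auto simp: Basis_vec_def)
  have "(\<lambda>x. f x \<bullet> b) = (\<lambda>x. f x $ i \<bullet> u)"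
    by (simp add: b inner_axis)
  then show "(\<lambda>x. f x \<bullet> b) \<in> borel_measurable M"
    using assms[of i] by simp
qed

lemma borel_measurable_matrix_vector_mult [measurable (raw)]:
  fixes A :: "'a \<Rightarrow> complex^'d^'e" and v :: "'a \<Rightarrow> complex^'d"
  assumes [measurable]: "A \<in> borel_measurable M" "v \<in> borel_measurable M"
  shows "(\<lambda>x. A x *v v x) \<in> borel_measurable M"
  by (rule borel_measurable_vecI) (simp add: matrix_vector_mult_def)

lemma completion_ex_borel_measurable_euclidean:
  fixes h :: "'a \<Rightarrow> 'b::euclidean_space"
  assumes "h \<in> borel_measurable (completion M)"
  shows "\<exists>g\<in>borel_measurable M. AE x in M. h x = g x"
proof -
  have "\<exists>g\<in>borel_measurable M. AE x in M. h x \<bullet> b = g x" for b :: 'b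
    using assms by (intro completion_ex_borel_measurable_real) simp
  then obtain g where g: "\<And>b. g b \<in> borel_measurable M" "\<And>b. AE x in M. h x \<bullet> b = g b x"
    by metis
  define G where "G x = (\<Sum>b\<in>Basis. g b x *\<^sub>R b)" for x
  have "G \<in> borel_measurable M"
    unfolding G_def using g(1) by measurable
  moreover have "AE x in M. \<forall>b\<in>Basis. h x \<bullet> b = g b x"
    by (rule AE_finite_allI) (use g(2) in auto)
  then have "AE x in M. h x = G x"
  proof eventually_elim
    case (elim x)
    then have "G x = (\<Sum>b\<in>Basis. (h x \<bullet> b) *\<^sub>R b)"
      by (simp add: G_def)
    then show ?case
      by (simp add: euclidean_representation)
  qed
  ultimately show ?thesis
    by blast
qed

lemma nn_integral_lborel_translate:
  fixes \<phi> :: "'a::euclidean_space \<Rightarrow> ennreal"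
  assumes "\<phi> \<in> borel_measurable borel"
  shows "(\<integral>\<^sup>+z. \<phi> z \<partial>lborel) = (\<integral>\<^sup>+u. \<phi> (u + y) \<partial>lborel)"
proof -
  have "(\<integral>\<^sup>+z. \<phi> z \<partial>lborel) = (\<integral>\<^sup>+z. \<phi> z \<partial>distr lborel borel ((+) y))"
    by (simp add: lborel_distr_plus)
  also have "\<dots> = (\<integral>\<^sup>+u. \<phi> (u + y) \<partial>lborel)"
    using assms by (subst nn_integral_distr) (auto simp: add.commute)
  finally show ?thesis .
qed

lemma nn_integral_lborel_reflect:
  fixes \<phi> :: "'a::euclidean_space \<Rightarrow> ennreal"
  assumes "\<phi> \<in> borel_measurable borel"
  shows "(\<integral>\<^sup>+z. \<phi> z \<partial>lborel) = (\<integral>\<^sup>+y. \<phi> (x - y) \<partial>lborel)"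
proof -
  have "lborel = distr lborel borel (\<lambda>y. x + (-1::real) *\<^sub>R y)"
    using lborel_affine[of "-1::real" x] by (simp add: density_1)
  then have "(\<integral>\<^sup>+z. \<phi> z \<partial>lborel) = (\<integral>\<^sup>+z. \<phi> z \<partial>distr lborel borel (\<lambda>y. x + (-1::real) *\<^sub>R y))"
    by simp
  also have "\<dots> = (\<integral>\<^sup>+y. \<phi> (x - y) \<partial>lborel)"
    using assms by (subst nn_integral_distr) auto
  finally show ?thesis .
qed

lemma AE_lborel_translate:
  fixes f g :: "'a::euclidean_space \<Rightarrow> 'b"
  assumes "AE x in lborel. f x = g x"
  shows "AE x in lborel. f (x - y) = g (x - y)"
proof -
  obtain N where N: "{x \<in> space lborel. f x \<noteq> g x} \<subseteq> N" "N \<in> null_sets lborel"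
    using assms by (auto simp: eventually_ae_filter)
  then have "AE x in lborel. x \<notin> {x. x - y \<in> N}"
    by (intro AE_not_in null_sets_translation)
  then show ?thesis
    by eventually_elim (use N in auto)
qed

section \<open>Convexity of powers and Jensen's inequality\<close>

lemma ennreal_powr_le_of_le_add:
  fixes a b c p :: real
  assumes "0 \<le> c" "c \<le> a + b" "0 \<le> a" "0 \<le> b" "0 < p"
  shows "ennreal (c powr p) \<le> ennreal (2 powr p) * (ennreal (a powr p) + ennreal (b powr p))"
proof -
  have "c powr p \<le> (2 * max a b) powr p"
    using assms by (intro powr_mono2) auto
  also have "\<dots> = 2 powr p * max a b powr p"
    using assms by (simp add: powr_mult)
  also have "\<dots> \<le> 2 powr p * (a powr p + b powr p)"
    using assms by (intro mult_left_mono) (auto simp: max_def)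
  finally have "ennreal (c powr p) \<le> ennreal (2 powr p * (a powr p + b powr p))"
    by (rule ennreal_leI)
  then show ?thesis
    by (simp add: ennreal_mult ennreal_plus)
qed

lemma powr_ge_tangent_line:
  fixes a t p :: real
  assumes "0 < a" "0 \<le> t" "1 \<le> p"
  shows "a powr p + p * a powr (p - 1) * (t - a) \<le> t powr p"
proof (cases "t = 0")
  case True
  have "a powr p \<le> p * a powr p"
    using assms by simp
  also have "\<dots> = p * a powr (p - 1) * a"
    using assms powr_add[of a "p - 1" 1] by simp
  finally show ?thesis
    using True assms by simp
next
  case False
  have d1: "((\<lambda>x. x powr p) has_real_derivative p * x powr (p - 1)) (at x)" if "x \<in> {0<..}" for x
    using that by (auto intro!: derivative_eq_intros)
  have d2: "((\<lambda>x. p * x powr (p - 1)) has_real_derivative p * ((p - 1) * x powr (p - 1 - 1))) (at x)"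
    if "x \<in> {0<..}" for x
    using that by (auto intro!: derivative_eq_intros)
  have "p * a powr (p - 1) * (t - a) \<le> t powr p - a powr p"
    by (rule f''_imp_f'[of "{0<..}", OF _ d1 d2]) (use assms False in \<open>auto simp: convex_real_interval\<close>)
  then show ?thesis
    by simp
qed

lemma le_one_add_powr:
  fixes t p :: real
  assumes "0 \<le> t" "1 \<le> p"
  shows "t \<le> 1 + t powr p"
proof (cases "t \<le> 1")
  case False
  then have "t powr 1 \<le> t powr p"
    using assms by (intro powr_mono) auto
  then show ?thesis
    using False by simp
qed (simp add: add_increasing2)

text \<open>Jensen's inequality for \<open>t \<mapsto> t powr p\<close>, via the tangent line at the average.\<close>

lemma powr_set_average_le_real:
  fixes n :: "'a \<Rightarrow> real"
  assumes C: "C \<in> sets M" "emeasure M C < \<infinity>" "0 < measure M C"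
    and n: "set_integrable M C n" "\<And>z. 0 \<le> n z" and p: "1 \<le> p"
    and np: "integrable M (\<lambda>z. indicator C z * n z powr p)"
  shows "((1 / measure M C) * (LINT z:C|M. n z)) powr p \<le> (1 / measure M C) * (LINT z|M. indicator C z * n z powr p)"
proof -
  define \<mu> where "\<mu> = measure M C"
  define a where "a = (1 / \<mu>) * (LINT z:C|M. n z)"
  have int_C: "integrable M (\<lambda>z. indicator C z :: real)"
    using C by (intro integrable_real_indicator) auto
  have int_n: "integrable M (\<lambda>z. indicator C z * n z)"
    using n(1) by (simp add: set_integrable_def)
  have "0 \<le> (LINT z|M. indicator C z * n z powr p)"
    by (intro integral_nonneg_AE) (simp add: indicator_def)
  moreover have "0 \<le> a"
    using C n(2) by (auto simp: a_def \<mu>_def set_lebesgue_integral_def intro!: integral_nonneg_AE)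
  ultimately have "a powr p \<le> (1 / \<mu>) * (LINT z|M. indicator C z * n z powr p)"
  proof (cases "a = 0")
    case False
    with \<open>0 \<le> a\<close> have "0 < a"
      by simp
    define P where "P = p * a powr (p - 1)"
    have tangent: "(\<lambda>z. indicator C z * (a powr p + P * (n z - a)))
        = (\<lambda>z. (a powr p - P * a) * indicator C z + P * (indicator C z * n z))"
      by (rule ext) (simp add: right_diff_distrib split: split_indicator)
    have "\<mu> * a powr p = (a powr p - P * a) * \<mu> + P * (\<mu> * a)"
      by (simp add: algebra_simps)
    also have "\<dots> = (LINT z|M. indicator C z * (a powr p + P * (n z - a)))"
      unfolding tangent using int_C int_n C by (simp add: \<mu>_def a_def set_lebesgue_integral_def)
    also have "\<dots> \<le> (LINT z|M. indicator C z * n z powr p)"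
    proof (rule integral_mono)
      show "integrable M (\<lambda>z. indicator C z * (a powr p + P * (n z - a)))"
        unfolding tangent using int_C int_n by auto
      show "indicator C z * (a powr p + P * (n z - a)) \<le> indicator C z * n z powr p" for z
        using powr_ge_tangent_line[OF \<open>0 < a\<close> n(2) p, of z] by (simp add: P_def indicator_def)
    qed (fact np)
    finally show ?thesis
      using C by (simp add: \<mu>_def field_simps)
  qed (use C in \<open>simp add: \<mu>_def\<close>)
  then show ?thesis
    by (simp add: a_def \<mu>_def)
qed

lemma powr_set_average_le:
  fixes n :: "'a \<Rightarrow> real"
  assumes C: "C \<in> sets M" "emeasure M C < \<infinity>" "0 < measure M C"
    and n: "set_integrable M C n" "\<And>z. 0 \<le> n z" and p: "1 \<le> p"
  shows "ennreal (((1 / measure M C) * (LINT z:C|M. n z)) powr p)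
    \<le> ennreal (1 / measure M C) * (\<integral>\<^sup>+z. indicator C z * ennreal (n z powr p) \<partial>M)"
proof (cases "(\<integral>\<^sup>+z. indicator C z * ennreal (n z powr p) \<partial>M) = \<infinity>")
  case False
  have eq: "(\<integral>\<^sup>+z. indicator C z * ennreal (n z powr p) \<partial>M) = (\<integral>\<^sup>+z. ennreal (indicator C z * n z powr p) \<partial>M)"
    by (intro nn_integral_cong) (simp add: indicator_def)
  have "integrable M (\<lambda>z. indicator C z * n z)"
    using n(1) by (simp add: set_integrable_def)
  then have "(\<lambda>z. (indicator C z * n z) powr p) \<in> borel_measurable M"
    using borel_measurable_integrable by measurable
  moreover have "(\<lambda>z. (indicator C z * n z) powr p) = (\<lambda>z. indicator C z * n z powr p)"
    by (auto simp: indicator_def)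
  ultimately have np: "integrable M (\<lambda>z. indicator C z * n z powr p)"
    using False eq by (intro integrableI_nonneg) (auto simp: top.not_eq_extremum)
  have "ennreal (((1 / measure M C) * (LINT z:C|M. n z)) powr p)
      \<le> ennreal (1 / measure M C) * ennreal (LINT z|M. indicator C z * n z powr p)"
    using powr_set_average_le_real[OF C n p np] C
    by (simp add: ennreal_mult[symmetric] ennreal_leI integral_nonneg)
  also have "ennreal (LINT z|M. indicator C z * n z powr p) = (\<integral>\<^sup>+z. indicator C z * ennreal (n z powr p) \<partial>M)"
    unfolding eq by (rule nn_integral_eq_integral[symmetric]) (use np in auto)
  finally show ?thesis .
qed (use C in \<open>simp add: ennreal_mult_top\<close>)

lemma norm_set_average_powr_le:
  fixes h :: "'a \<Rightarrow> 'b::{banach, second_countable_topology}"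
  assumes C: "C \<in> sets M" "emeasure M C < \<infinity>" "0 < measure M C"
    and h: "set_integrable M C h" and p: "1 \<le> p"
  shows "ennreal (norm ((1 / measure M C) *\<^sub>R (LINT z:C|M. h z)) powr p)
    \<le> ennreal (1 / measure M C) * (\<integral>\<^sup>+z. indicator C z * ennreal (norm (h z) powr p) \<partial>M)"
proof -
  have "norm ((1 / measure M C) *\<^sub>R (LINT z:C|M. h z)) \<le> (1 / measure M C) * (LINT z:C|M. norm (h z))"
    using C set_integral_norm_bound[OF h] by (simp add: divide_right_mono)
  then have "ennreal (norm ((1 / measure M C) *\<^sub>R (LINT z:C|M. h z)) powr p)
      \<le> ennreal (((1 / measure M C) * (LINT z:C|M. norm (h z))) powr p)"
    using p by (intro ennreal_leI powr_mono2) auto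
  also have "\<dots> \<le> ennreal (1 / measure M C) * (\<integral>\<^sup>+z. indicator C z * ennreal (norm (h z) powr p) \<partial>M)"
    using C h p by (intro powr_set_average_le) (auto intro: set_integrable_norm)
  finally show ?thesis .
qed

lemma set_integrableI_powr:
  fixes g :: "'a \<Rightarrow> 'b::{banach, second_countable_topology}"
  assumes S: "S \<in> sets M" "emeasure M S < \<infinity>" and g: "g \<in> borel_measurable M" and p: "1 \<le> p"
    and fin: "(\<integral>\<^sup>+z. indicator S z * ennreal (norm (g z) powr p) \<partial>M) < \<infinity>"
  shows "set_integrable M S g"
  unfolding set_integrable_def
proof (rule integrableI_bounded)
  show "(\<lambda>z. indicator S z *\<^sub>R g z) \<in> borel_measurable M"
    using S g by measurable
  have "(\<integral>\<^sup>+z. ennreal (norm (indicator S z *\<^sub>R g z)) \<partial>M)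
      \<le> (\<integral>\<^sup>+z. indicator S z + indicator S z * ennreal (norm (g z) powr p) \<partial>M)"
  proof (intro nn_integral_mono)
    fix z
    have "ennreal (norm (g z)) \<le> ennreal (1 + norm (g z) powr p)"
      using le_one_add_powr[OF norm_ge_zero p] by (rule ennreal_leI)
    then show "ennreal (norm (indicator S z *\<^sub>R g z)) \<le> indicator S z + indicator S z * ennreal (norm (g z) powr p)"
      by (simp add: indicator_def ennreal_plus)
  qed
  also have "\<dots> = emeasure M S + (\<integral>\<^sup>+z. indicator S z * ennreal (norm (g z) powr p) \<partial>M)"
    using S g by (subst nn_integral_add) auto
  also have "\<dots> < \<infinity>"
    using S fin by simp
  finally show "(\<integral>\<^sup>+z. ennreal (norm (indicator S z *\<^sub>R g z)) \<partial>M) < \<infinity>" .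
qed

section \<open>Coercivity of a.e. injective matrix functions\<close>

lemma complex_matrix_vector_mult_scaleR:
  fixes A :: "complex^'n^'m"
  shows "A *v (c *\<^sub>R x) = c *\<^sub>R (A *v x)"
  using linear_iff matrix_vector_mul_linear by blast

lemma nn_integral_matrix_norm_powr_homogeneous:
  fixes W :: "'a \<Rightarrow> complex^'d^'e"
  assumes [measurable]: "W \<in> borel_measurable M" "S \<in> sets M"
  shows "(\<integral>\<^sup>+x. indicator S x * ennreal (norm (W x *v (c *\<^sub>R v)) powr p) \<partial>M)
    = ennreal (\<bar>c\<bar> powr p) * (\<integral>\<^sup>+x. indicator S x * ennreal (norm (W x *v v) powr p) \<partial>M)"
proof -
  have "(\<integral>\<^sup>+x. indicator S x * ennreal (norm (W x *v (c *\<^sub>R v)) powr p) \<partial>M)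
      = (\<integral>\<^sup>+x. ennreal (\<bar>c\<bar> powr p) * (indicator S x * ennreal (norm (W x *v v) powr p)) \<partial>M)"
    by (intro nn_integral_cong)
      (simp add: complex_matrix_vector_mult_scaleR powr_mult ennreal_mult' mult_ac)
  also have "\<dots> = ennreal (\<bar>c\<bar> powr p) * (\<integral>\<^sup>+x. indicator S x * ennreal (norm (W x *v v) powr p) \<partial>M)"
    by (intro nn_integral_cmult) measurable
  finally show ?thesis .
qed

lemma nn_integral_matrix_norm_powr_lsc:
  fixes W :: "'a \<Rightarrow> complex^'d^'e"
  assumes [measurable]: "W \<in> borel_measurable M" "S \<in> sets M"
    and "0 < p" "u \<longlonglongrightarrow> l"
  shows "(\<integral>\<^sup>+x. indicator S x * ennreal (norm (W x *v l) powr p) \<partial>M)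
    \<le> liminf (\<lambda>k. \<integral>\<^sup>+x. indicator S x * ennreal (norm (W x *v u k) powr p) \<partial>M)"
proof -
  have pointwise: "(\<lambda>k. indicator S x * ennreal (norm (W x *v u k) powr p))
      \<longlonglongrightarrow> indicator S x * ennreal (norm (W x *v l) powr p)" for x
  proof -
    have "(\<lambda>k. W x *v u k) \<longlonglongrightarrow> W x *v l"
      using assms(4) by (intro bounded_linear.tendsto[OF matrix_vector_mul_bounded_linear])
    then have "(\<lambda>k. norm (W x *v u k) powr p) \<longlonglongrightarrow> norm (W x *v l) powr p"
      using assms(3) by (intro tendsto_powr' tendsto_norm) auto
    then show ?thesis
      by (intro ennreal_tendsto_cmult tendsto_ennrealI) (auto simp: indicator_def)
  qed
  have "(\<integral>\<^sup>+x. indicator S x * ennreal (norm (W x *v l) powr p) \<partial>M)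
      = (\<integral>\<^sup>+x. liminf (\<lambda>k. indicator S x * ennreal (norm (W x *v u k) powr p)) \<partial>M)"
    by (intro nn_integral_cong lim_imp_Liminf[symmetric] sequentially_bot pointwise)
  also have "\<dots> \<le> liminf (\<lambda>k. \<integral>\<^sup>+x. indicator S x * ennreal (norm (W x *v u k) powr p) \<partial>M)"
    by (intro nn_integral_liminf) measurable
  finally show ?thesis .
qed

lemma nn_integral_matrix_norm_powr_pos:
  fixes W :: "'a \<Rightarrow> complex^'d^'e"
  assumes [measurable]: "W \<in> borel_measurable M"
    and inj: "AE x in M. \<forall>v. v \<noteq> 0 \<longrightarrow> W x *v v \<noteq> 0"
    and S: "S \<in> sets M" "0 < emeasure M S" and "0 < p" "l \<noteq> 0"
  shows "0 < (\<integral>\<^sup>+x. indicator S x * ennreal (norm (W x *v l) powr p) \<partial>M)"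
proof (rule ccontr)
  assume "\<not> ?thesis"
  moreover have "(\<lambda>x. indicator S x * ennreal (norm (W x *v l) powr p)) \<in> borel_measurable M"
    using S(1) by measurable
  ultimately have "AE x in M. indicator S x * ennreal (norm (W x *v l) powr p) = 0"
    using nn_integral_0_iff_AE by (metis not_gr_zero)
  then have "AE x in M. x \<notin> S"
    using inj by eventually_elim (use assms(5,6) in \<open>auto simp: indicator_def\<close>)
  then have "S \<in> null_sets M"
    using S(1) by (simp add: AE_iff_null_sets)
  then show False
    using S(2) by (simp add: null_sets_def)
qed

text \<open>A minimising sequence on the unit sphere has a convergent subsequence, and by Fatou's lemma
  its limit would be a unit vector annihilated by \<open>W\<close> on \<open>S\<close>.\<close>

lemma nn_integral_matrix_norm_powr_coercive:
  fixes W :: "'a \<Rightarrow> complex^'d^'e"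
  assumes W: "W \<in> borel_measurable M" and inj: "AE x in M. \<forall>v. v \<noteq> 0 \<longrightarrow> W x *v v \<noteq> 0"
    and S: "S \<in> sets M" "0 < emeasure M S" and p: "0 < p"
  shows "\<exists>\<alpha>>0. \<forall>v. ennreal (\<alpha> * norm v powr p) \<le> (\<integral>\<^sup>+x. indicator S x * ennreal (norm (W x *v v) powr p) \<partial>M)"
proof (rule ccontr)
  define \<Phi> where "\<Phi> v = (\<integral>\<^sup>+x. indicator S x * ennreal (norm (W x *v v) powr p) \<partial>M)" for v
  assume "\<not> ?thesis"
  then have "\<exists>v. \<Phi> v < ennreal (inverse (real (Suc k)) * norm v powr p)" for k
    by (auto simp: \<Phi>_def not_le)
  then obtain v where v: "\<And>k. \<Phi> (v k) < ennreal (inverse (real (Suc k)) * norm (v k) powr p)"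
    by metis
  have "v k \<noteq> 0" for k
    using v[of k] by (auto simp: \<Phi>_def)
  define u where "u k = (1 / norm (v k)) *\<^sub>R v k" for k
  have u_sphere: "u k \<in> sphere 0 1" for k
    using \<open>v k \<noteq> 0\<close> by (simp add: u_def)
  have u_small: "\<Phi> (u k) \<le> ennreal (inverse (real (Suc k)))" for k
  proof -
    have "\<Phi> (u k) = ennreal ((1 / norm (v k)) powr p) * \<Phi> (v k)"
      unfolding u_def \<Phi>_def using W S(1) by (simp add: nn_integral_matrix_norm_powr_homogeneous)
    also have "\<dots> \<le> ennreal ((1 / norm (v k)) powr p) * ennreal (inverse (real (Suc k)) * norm (v k) powr p)"
      using v[of k] by (intro mult_left_mono) auto
    also have "\<dots> = ennreal (inverse (real (Suc k)))"
      using \<open>v k \<noteq> 0\<close> by (simp add: ennreal_mult[symmetric] powr_divide)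
    finally show ?thesis .
  qed
  obtain l r where l: "l \<in> sphere 0 1" and r: "strict_mono r" and lim: "(u \<circ> r) \<longlonglongrightarrow> l"
    using compact_sphere[THEN compact_imp_seq_compact, THEN seq_compactE] u_sphere by metis
  have "(\<lambda>k. \<Phi> (u (r k))) \<longlonglongrightarrow> 0"
  proof (rule tendsto_sandwich[of "\<lambda>_. 0" _ _ "\<lambda>k. ennreal (inverse (real (Suc k)))"])
    show "\<forall>\<^sub>F k in sequentially. \<Phi> (u (r k)) \<le> ennreal (inverse (real (Suc k)))"
    proof (intro always_eventually allI order_trans[OF u_small])
      show "ennreal (inverse (real (Suc (r k)))) \<le> ennreal (inverse (real (Suc k)))" for k
        using seq_suble[OF r, of k] by (intro ennreal_leI) (simp add: field_simps)
    qed
    show "(\<lambda>k. ennreal (inverse (real (Suc k)))) \<longlonglongrightarrow> 0"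
      using LIMSEQ_inverse_real_of_nat by (metis ennreal_0 tendsto_ennrealI)
  qed auto
  then have "liminf (\<lambda>k. \<Phi> (u (r k))) = 0"
    by (rule lim_imp_Liminf[OF sequentially_bot])
  then have "\<Phi> l \<le> 0"
    using nn_integral_matrix_norm_powr_lsc[OF W S(1) p lim] by (simp add: \<Phi>_def comp_def)
  moreover have "0 < \<Phi> l"
    unfolding \<Phi>_def using l by (intro nn_integral_matrix_norm_powr_pos[OF W inj S p]) auto
  ultimately show False
    by simp
qed

section \<open>A grid of half-open cubes\<close>

definition grid_index :: "real \<Rightarrow> real^'n \<Rightarrow> ('n \<Rightarrow> int)" where
  "grid_index \<delta> x = (\<lambda>i. \<lfloor>x $ i / \<delta>\<rfloor>)"

definition grid_cell :: "real \<Rightarrow> ('n \<Rightarrow> int) \<Rightarrow> (real^'n) set" where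
  "grid_cell \<delta> k = {x. grid_index \<delta> x = k}"

definition open_cube :: "real \<Rightarrow> (real^'n) set" where
  "open_cube \<delta> = box (- (\<delta> *\<^sub>R 1)) (\<delta> *\<^sub>R 1)"

definition central_indices :: "int \<Rightarrow> ('n \<Rightarrow> int) set" where
  "central_indices N = PiE UNIV (\<lambda>_. {-N..<N})"

lemma mem_grid_cell:
  assumes "0 < \<delta>"
  shows "x \<in> grid_cell \<delta> k \<longleftrightarrow> (\<forall>i. \<delta> * k i \<le> x $ i \<and> x $ i < \<delta> * (k i + 1))"
proof -
  have "\<lfloor>x $ i / \<delta>\<rfloor> = k i \<longleftrightarrow> \<delta> * k i \<le> x $ i \<and> x $ i < \<delta> * (k i + 1)" for i
    using assms by (simp add: floor_eq_iff pos_le_divide_eq pos_divide_less_eq mult.commute)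
  then show ?thesis
    by (auto simp: grid_cell_def grid_index_def fun_eq_iff)
qed

lemma indicator_grid_cell: "indicator (grid_cell \<delta> k) x = (if grid_index \<delta> x = k then 1 else 0)"
  by (simp add: grid_cell_def indicator_def)

lemma sets_grid_cell [measurable]:
  fixes k :: "'n::finite \<Rightarrow> int"
  shows "grid_cell \<delta> k \<in> sets (lborel :: (real^'n) measure)"
proof -
  have "{x \<in> space (lborel :: (real^'n) measure). \<forall>i. \<lfloor>x $ i / \<delta>\<rfloor> = k i} \<in> sets lborel"
    by measurable
  then show ?thesis
    by (simp add: grid_cell_def grid_index_def fun_eq_iff)
qed

lemma sets_grid_cell_borel [measurable]:
  fixes k :: "'n::finite \<Rightarrow> int"
  shows "grid_cell \<delta> k \<in> sets (borel :: (real^'n) measure)"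
  using sets_grid_cell[of \<delta> k] by simp

lemma sets_open_cube [measurable]: "open_cube \<delta> \<in> sets borel"
  by (simp add: open_cube_def)

lemma prod_Basis_inner_const:
  fixes v :: "real^'n"
  assumes "\<And>i. v $ i = c"
  shows "(\<Prod>b\<in>Basis. v \<bullet> b) = c ^ CARD('n)"
proof -
  have "v \<bullet> b = c" if "b \<in> Basis" for b
    using that assms by (auto simp: Basis_vec_def inner_axis)
  then show ?thesis
    by simp
qed

lemma emeasure_grid_cell:
  fixes k :: "'n::finite \<Rightarrow> int"
  assumes "0 < \<delta>"
  shows "emeasure (lborel :: (real^'n) measure) (grid_cell \<delta> k) = ennreal (\<delta> ^ CARD('n))"
proof -
  define lo :: "real^'n" where "lo = (\<chi> i. \<delta> * k i)"
  define hi :: "real^'n" where "hi = (\<chi> i. \<delta> * (k i + 1))"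
  have le: "\<forall>b\<in>Basis. lo \<bullet> b \<le> hi \<bullet> b"
    using assms by (auto simp: Basis_vec_def inner_axis lo_def hi_def)
  have side: "(hi - lo) $ i = \<delta>" for i
    by (simp add: lo_def hi_def algebra_simps)
  have "box lo hi \<subseteq> grid_cell \<delta> k" "grid_cell \<delta> k \<subseteq> cbox lo hi"
    using assms by (auto simp: mem_box_cart mem_grid_cell lo_def hi_def less_imp_le)
  then have "emeasure lborel (box lo hi) \<le> emeasure lborel (grid_cell \<delta> k)"
    "emeasure lborel (grid_cell \<delta> k) \<le> emeasure lborel (cbox lo hi)"
    by (auto intro!: emeasure_mono)
  moreover have "emeasure lborel (box lo hi) = ennreal (\<delta> ^ CARD('n))"
    "emeasure lborel (cbox lo hi) = ennreal (\<delta> ^ CARD('n))"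
    using le by (simp_all add: emeasure_lborel_box_eq emeasure_lborel_cbox_eq prod_Basis_inner_const[OF side])
  ultimately show ?thesis
    by simp
qed

lemma measure_grid_cell:
  fixes k :: "'n::finite \<Rightarrow> int"
  assumes "0 < \<delta>"
  shows "measure (lborel :: (real^'n) measure) (grid_cell \<delta> k) = \<delta> ^ CARD('n)"
  using emeasure_grid_cell[OF assms] assms by (simp add: measure_def)

lemma emeasure_open_cube:
  assumes "0 < \<delta>"
  shows "emeasure (lborel :: (real^'n) measure) (open_cube \<delta>) = ennreal ((2 * \<delta>) ^ CARD('n))"
proof -
  have le: "\<forall>b\<in>(Basis :: (real^'n) set). (- (\<delta> *\<^sub>R 1)) \<bullet> b \<le> (\<delta> *\<^sub>R 1) \<bullet> b"
    using assms by (auto simp: Basis_vec_def inner_axis)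
  have side: "((\<delta> *\<^sub>R 1) - (- (\<delta> *\<^sub>R 1))) $ i = 2 * \<delta>" for i :: 'n
    by simp
  show ?thesis
    unfolding open_cube_def
    by (subst emeasure_lborel_box_eq) (simp only: if_P[OF le] prod_Basis_inner_const[OF side])
qed

lemma diff_mem_open_cube:
  assumes "0 < \<delta>" "x \<in> grid_cell \<delta> k" "z \<in> grid_cell \<delta> k"
  shows "x - z \<in> open_cube \<delta>"
  unfolding open_cube_def mem_box_cart
proof
  fix i
  have "\<delta> * k i \<le> x $ i \<and> x $ i < \<delta> * (k i + 1)" "\<delta> * k i \<le> z $ i \<and> z $ i < \<delta> * (k i + 1)"
    using assms by (auto simp: mem_grid_cell)
  then show "(- (\<delta> *\<^sub>R 1)) $ i < (x - z) $ i \<and> (x - z) $ i < (\<delta> *\<^sub>R 1) $ i"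
    by (simp add: algebra_simps)
qed

lemma open_cube_subset_ball: "open_cube \<delta> \<subseteq> ball (0 :: real^'n) (real CARD('n) * \<delta>)"
proof
  fix y :: "real^'n"
  assume "y \<in> open_cube \<delta>"
  then have "- \<delta> < y $ i \<and> y $ i < \<delta>" for i
    by (simp add: open_cube_def mem_box_cart)
  then have "\<bar>y $ i\<bar> < \<delta>" for i
    by (meson abs_less_iff minus_less_iff)
  then have "(\<Sum>i\<in>UNIV. \<bar>y $ i\<bar>) < (\<Sum>i\<in>(UNIV :: 'n set). \<delta>)"
    by (intro sum_strict_mono) auto
  then show "y \<in> ball 0 (real CARD('n) * \<delta>)"
    using norm_le_l1_cart[of y] by simp
qed

lemma finite_central_indices: "finite (central_indices N :: ('n::finite \<Rightarrow> int) set)"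
  by (simp add: central_indices_def finite_PiE)

lemma grid_index_in_central_indices:
  fixes x :: "real^'n"
  assumes "0 < \<delta>" "x \<in> ball 0 R"
  shows "grid_index \<delta> x \<in> central_indices \<lceil>R / \<delta>\<rceil>"
proof -
  have "grid_index \<delta> x i \<in> {-\<lceil>R / \<delta>\<rceil>..<\<lceil>R / \<delta>\<rceil>}" for i
  proof -
    have "\<bar>x $ i\<bar> < R"
      using component_le_norm_cart[of x i] assms(2) by simp
    then have "\<bar>x $ i / \<delta>\<bar> < R / \<delta>"
      using assms(1) by (simp add: abs_divide divide_strict_right_mono)
    then have "- (R / \<delta>) < x $ i / \<delta>" "x $ i / \<delta> < R / \<delta>"
      by linarith+
    moreover have "real_of_int \<lfloor>x $ i / \<delta>\<rfloor> \<le> x $ i / \<delta>" "R / \<delta> \<le> real_of_int \<lceil>R / \<delta>\<rceil>"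
      by linarith+
    ultimately have "- \<lceil>R / \<delta>\<rceil> \<le> \<lfloor>x $ i / \<delta>\<rfloor>" "\<lfloor>x $ i / \<delta>\<rfloor> < \<lceil>R / \<delta>\<rceil>"
      by (simp_all add: ceiling_def floor_mono) linarith
    then show ?thesis
      by (simp add: grid_index_def)
  qed
  then show ?thesis
    by (auto simp: central_indices_def PiE_UNIV_domain)
qed

lemma grid_cell_subset_cbox:
  assumes "0 < \<delta>" "k \<in> central_indices N"
  shows "grid_cell \<delta> k \<subseteq> cbox (- ((\<delta> * N) *\<^sub>R 1)) ((\<delta> * N) *\<^sub>R (1 :: real^'n))"
proof
  fix x :: "real^'n"
  assume x: "x \<in> grid_cell \<delta> k"
  have "\<delta> * (- N) \<le> x $ i \<and> x $ i \<le> \<delta> * N" for i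
  proof -
    have "-N \<le> k i" "k i < N"
      using assms(2) by (auto simp: central_indices_def PiE_UNIV_domain)
    then have "\<delta> * (- N) \<le> \<delta> * k i" "\<delta> * (k i + 1) \<le> \<delta> * N"
      using assms(1) by (intro mult_left_mono; simp)+
    moreover have "\<delta> * k i \<le> x $ i" "x $ i < \<delta> * (k i + 1)"
      using x assms(1) by (simp_all add: mem_grid_cell)
    ultimately show ?thesis
      by linarith
  qed
  then show "x \<in> cbox (- ((\<delta> * N) *\<^sub>R 1)) ((\<delta> * N) *\<^sub>R 1)"
    by (simp add: mem_box_cart)
qed

lemma sum_grid_cells_scaleR:
  fixes F :: "('n::finite \<Rightarrow> int) \<Rightarrow> 'a::real_vector"
  assumes "finite K"
  shows "(\<Sum>k\<in>K. indicator (grid_cell \<delta> k) x *\<^sub>R F k) = (if grid_index \<delta> x \<in> K then F (grid_index \<delta> x) else 0)"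
  using assms by (simp add: indicator_grid_cell if_distrib[of "\<lambda>c. c *\<^sub>R _"] sum.delta cong: if_cong)

lemma sum_grid_cells_mult:
  fixes F :: "('n::finite \<Rightarrow> int) \<Rightarrow> ennreal"
  assumes "finite K"
  shows "(\<Sum>k\<in>K. indicator (grid_cell \<delta> k) x * F k) = (if grid_index \<delta> x \<in> K then F (grid_index \<delta> x) else 0)"
  using assms by (simp add: indicator_grid_cell if_distrib[of "\<lambda>c. c * _"] sum.delta cong: if_cong)

lemma sum_grid_cells_indicator_le_open_cube:
  fixes K :: "('n::finite \<Rightarrow> int) set"
  assumes "finite K" "0 < \<delta>"
  shows "(\<Sum>k\<in>K. indicator (grid_cell \<delta> k) x * indicator (grid_cell \<delta> k) z) \<le> (indicator (open_cube \<delta>) (x - z) :: ennreal)"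
proof -
  have "x \<in> grid_cell \<delta> (grid_index \<delta> x)"
    by (simp add: grid_cell_def)
  then have "z \<in> grid_cell \<delta> (grid_index \<delta> x) \<Longrightarrow> x - z \<in> open_cube \<delta>"
    using diff_mem_open_cube[OF assms(2)] by blast
  then show ?thesis
    using sum_grid_cells_mult[OF assms(1), of \<delta> x "\<lambda>k. indicator (grid_cell \<delta> k) z"]
    by (auto split: split_indicator)
qed

section \<open>The weighted integral and cell averages\<close>

definition weighted_Lp_integral :: "('a::euclidean_space \<Rightarrow> complex^'d^'d) \<Rightarrow> real \<Rightarrow> ('a \<Rightarrow> complex^'d) \<Rightarrow> ennreal" where
  "weighted_Lp_integral W p h = (\<integral>\<^sup>+x. ennreal (norm (W x *v h x) powr p) \<partial>lborel)"

lemma weighted_Lp_integral_cong_AE: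
  "AE x in lborel. f x = g x \<Longrightarrow> weighted_Lp_integral W p f = weighted_Lp_integral W p g"
  unfolding weighted_Lp_integral_def by (intro nn_integral_cong_AE) auto

lemma weighted_Lp_integral_translate_diff_cong_AE:
  assumes "AE x in lborel. f x = g x"
  shows "weighted_Lp_integral W p (\<lambda>x. f (x - y) - f x) = weighted_Lp_integral W p (\<lambda>x. g (x - y) - g x)"
  using AE_lborel_translate[OF assms, of y] assms by (intro weighted_Lp_integral_cong_AE) (auto elim: eventually_mono)

lemma weighted_Lp_integral_diff_cong_AE:
  assumes "AE x in lborel. f x = g x"
  shows "weighted_Lp_integral W p (\<lambda>x. f x - h x) = weighted_Lp_integral W p (\<lambda>x. g x - h x)"
  using assms by (intro weighted_Lp_integral_cong_AE) (auto elim: eventually_mono)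

lemma weighted_Lp_integral_indicator_cong_AE:
  assumes "AE x in lborel. f x = g x"
  shows "weighted_Lp_integral W p (\<lambda>x. indicator S x *\<^sub>R f x) = weighted_Lp_integral W p (\<lambda>x. indicator S x *\<^sub>R g x)"
  using assms by (intro weighted_Lp_integral_cong_AE) (auto elim: eventually_mono)

lemma weighted_Lp_integral_add_le:
  assumes [measurable]: "W \<in> borel_measurable lborel" "f \<in> borel_measurable lborel" "g \<in> borel_measurable lborel"
    and "0 < p"
  shows "weighted_Lp_integral W p (\<lambda>x. f x + g x)
    \<le> ennreal (2 powr p) * (weighted_Lp_integral W p f + weighted_Lp_integral W p g)"
proof -
  have "weighted_Lp_integral W p (\<lambda>x. f x + g x)
      \<le> (\<integral>\<^sup>+x. ennreal (2 powr p) * (ennreal (norm (W x *v f x) powr p) + ennreal (norm (W x *v g x) powr p)) \<partial>lborel)"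
    unfolding weighted_Lp_integral_def
    using assms(4) by (intro nn_integral_mono ennreal_powr_le_of_le_add)
      (auto simp: matrix_vector_right_distrib norm_triangle_ineq)
  also have "\<dots> = ennreal (2 powr p) * (weighted_Lp_integral W p f + weighted_Lp_integral W p g)"
    unfolding weighted_Lp_integral_def by (simp add: nn_integral_cmult nn_integral_add)
  finally show ?thesis .
qed

lemma nn_integral_translated_weight_finite:
  fixes W :: "real^'n \<Rightarrow> complex^'d^'d" and g :: "real^'n \<Rightarrow> complex^'d"
  assumes [measurable]: "W \<in> borel_measurable lborel" "g \<in> borel_measurable lborel"
    and p: "0 < p" and \<delta>: "0 < \<delta>"
    and g_fin: "weighted_Lp_integral W p g < \<infinity>"
    and transl: "\<forall>y\<in>open_cube \<delta>. weighted_Lp_integral W p (\<lambda>x. g (x - y) - g x) \<le> ennreal E"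
  shows "(\<integral>\<^sup>+z. \<integral>\<^sup>+y. indicator (open_cube \<delta>) y * ennreal (norm (W (z + y) *v g z) powr p) \<partial>lborel \<partial>lborel) < \<infinity>"
proof -
  define B where "B = ennreal (2 powr p) * (ennreal E + weighted_Lp_integral W p g)"
  have translate_le: "weighted_Lp_integral W p (\<lambda>x. g (x - y)) \<le> B" if "y \<in> open_cube \<delta>" for y
  proof -
    have "weighted_Lp_integral W p (\<lambda>x. g (x - y)) = weighted_Lp_integral W p (\<lambda>x. (g (x - y) - g x) + g x)"
      by simp
    also have "\<dots> \<le> ennreal (2 powr p) * (weighted_Lp_integral W p (\<lambda>x. g (x - y) - g x) + weighted_Lp_integral W p g)"
      using p by (intro weighted_Lp_integral_add_le) auto
    also have "\<dots> \<le> B"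
      using transl that unfolding B_def by (intro mult_left_mono add_right_mono) auto
    finally show ?thesis .
  qed
  have "(\<integral>\<^sup>+z. \<integral>\<^sup>+y. indicator (open_cube \<delta>) y * ennreal (norm (W (z + y) *v g z) powr p) \<partial>lborel \<partial>lborel)
      = (\<integral>\<^sup>+y. \<integral>\<^sup>+z. indicator (open_cube \<delta>) y * ennreal (norm (W (z + y) *v g z) powr p) \<partial>lborel \<partial>lborel)"
    by (rule lborel_pair.Fubini') measurable
  also have "\<dots> = (\<integral>\<^sup>+y. indicator (open_cube \<delta>) y * weighted_Lp_integral W p (\<lambda>x. g (x - y)) \<partial>lborel)"
  proof (intro nn_integral_cong)
    fix y :: "real^'n"
    have "weighted_Lp_integral W p (\<lambda>x. g (x - y)) = (\<integral>\<^sup>+z. ennreal (norm (W (z + y) *v g z) powr p) \<partial>lborel)"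
      unfolding weighted_Lp_integral_def by (subst nn_integral_lborel_translate[where y=y]) simp_all
    then show "(\<integral>\<^sup>+z. indicator (open_cube \<delta>) y * ennreal (norm (W (z + y) *v g z) powr p) \<partial>lborel)
        = indicator (open_cube \<delta>) y * weighted_Lp_integral W p (\<lambda>x. g (x - y))"
      by (simp add: nn_integral_cmult)
  qed
  also have "\<dots> \<le> (\<integral>\<^sup>+y. B * indicator (open_cube \<delta>) y \<partial>(lborel :: (real^'n) measure))"
    using translate_le by (intro nn_integral_mono) (auto simp: indicator_def)
  also have "\<dots> = B * emeasure lborel (open_cube \<delta> :: (real^'n) set)"
    by (rule nn_integral_cmult_indicator) simp
  also have "\<dots> < \<infinity>"
    using g_fin \<delta> by (simp add: B_def emeasure_open_cube ennreal_mult_less_top)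
  finally show ?thesis .
qed

text \<open>Averaging the coercivity bound of \<open>W\<close> on a cell over translates of \<open>g\<close> by \<open>open_cube \<delta>\<close>
  controls \<open>\<integral>\<^sub>cell |g|^p\<close> by the weighted norms of these translates.\<close>

lemma set_integrable_grid_cell:
  fixes W :: "real^'n \<Rightarrow> complex^'d^'d" and g :: "real^'n \<Rightarrow> complex^'d"
  assumes W: "W \<in> borel_measurable lborel" and inj: "AE x in lborel. \<forall>v. v \<noteq> 0 \<longrightarrow> W x *v v \<noteq> 0"
    and p: "1 \<le> p" and \<delta>: "0 < \<delta>" and g: "g \<in> borel_measurable lborel"
    and g_fin: "weighted_Lp_integral W p g < \<infinity>"
    and transl: "\<forall>y\<in>open_cube \<delta>. weighted_Lp_integral W p (\<lambda>x. g (x - y) - g x) \<le> ennreal E"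
  shows "set_integrable lborel (grid_cell \<delta> k) g"
proof -
  note [measurable] = W g
  obtain \<alpha> where \<alpha>: "0 < \<alpha>"
    "\<And>v. ennreal (\<alpha> * norm v powr p) \<le> (\<integral>\<^sup>+u. indicator (grid_cell \<delta> k) u * ennreal (norm (W u *v v) powr p) \<partial>lborel)"
    using nn_integral_matrix_norm_powr_coercive[OF W inj sets_grid_cell, of \<delta> k p] emeasure_grid_cell[OF \<delta>, of k] \<delta> p
    by auto
  have lower: "ennreal \<alpha> * (indicator (grid_cell \<delta> k) z * ennreal (norm (g z) powr p))
      \<le> (\<integral>\<^sup>+y. indicator (open_cube \<delta>) y * ennreal (norm (W (z + y) *v g z) powr p) \<partial>lborel)" for z
  proof (cases "z \<in> grid_cell \<delta> k")
    case True
    have "ennreal \<alpha> * (indicator (grid_cell \<delta> k) z * ennreal (norm (g z) powr p)) = ennreal (\<alpha> * norm (g z) powr p)"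
      using True \<alpha>(1) by (simp add: ennreal_mult)
    also have "\<dots> \<le> (\<integral>\<^sup>+u. indicator (grid_cell \<delta> k) u * ennreal (norm (W u *v g z) powr p) \<partial>lborel)"
      by (rule \<alpha>(2))
    also have "\<dots> \<le> (\<integral>\<^sup>+u. indicator (open_cube \<delta>) (u - z) * ennreal (norm (W u *v g z) powr p) \<partial>lborel)"
      using diff_mem_open_cube[OF \<delta> _ True] by (intro nn_integral_mono) (auto simp: indicator_def)
    also have "\<dots> = (\<integral>\<^sup>+y. indicator (open_cube \<delta>) y * ennreal (norm (W (z + y) *v g z) powr p) \<partial>lborel)"
      by (subst nn_integral_lborel_translate[where y=z]) (simp_all add: add.commute)
    finally show ?thesis .
  qed simp
  have "ennreal \<alpha> * (\<integral>\<^sup>+z. indicator (grid_cell \<delta> k) z * ennreal (norm (g z) powr p) \<partial>lborel)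
      = (\<integral>\<^sup>+z. ennreal \<alpha> * (indicator (grid_cell \<delta> k) z * ennreal (norm (g z) powr p)) \<partial>lborel)"
    by (rule nn_integral_cmult[symmetric]) measurable
  also have "\<dots> \<le> (\<integral>\<^sup>+z. \<integral>\<^sup>+y. indicator (open_cube \<delta>) y * ennreal (norm (W (z + y) *v g z) powr p) \<partial>lborel \<partial>lborel)"
    by (intro nn_integral_mono lower)
  also have "\<dots> < \<infinity>"
    using p by (intro nn_integral_translated_weight_finite[OF W g _ \<delta> g_fin transl]) simp
  finally have "(\<integral>\<^sup>+z. indicator (grid_cell \<delta> k) z * ennreal (norm (g z) powr p) \<partial>lborel) < \<infinity>"
    using \<alpha>(1) by (auto simp: ennreal_mult_less_top)
  then show ?thesis
    using emeasure_grid_cell[OF \<delta>, of k] by (intro set_integrableI_powr[OF _ _ g p]) auto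
qed

definition cell_average :: "real \<Rightarrow> (real^'n \<Rightarrow> 'b::{banach, second_countable_topology}) \<Rightarrow> ('n \<Rightarrow> int) \<Rightarrow> 'b" where
  "cell_average \<delta> g k = (1 / measure lborel (grid_cell \<delta> k)) *\<^sub>R (LINT z:grid_cell \<delta> k|lborel. g z)"

lemma set_integrable_matrix_vector_mult:
  fixes T :: "complex^'d^'e" and h :: "'a \<Rightarrow> complex^'d"
  assumes "set_integrable M C h"
  shows "set_integrable M C (\<lambda>z. T *v h z)"
  using integrable_bounded_linear[OF matrix_vector_mul_bounded_linear assms[unfolded set_integrable_def], of T]
  by (simp add: set_integrable_def complex_matrix_vector_mult_scaleR)

lemma set_integral_matrix_vector_mult:
  fixes T :: "complex^'d^'e" and h :: "'a \<Rightarrow> complex^'d"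
  assumes "set_integrable M C h"
  shows "(LINT z:C|M. T *v h z) = T *v (LINT z:C|M. h z)"
proof -
  have "(LINT z:C|M. T *v h z) = (LINT z|M. T *v (indicator C z *\<^sub>R h z))"
    by (simp add: set_lebesgue_integral_def complex_matrix_vector_mult_scaleR)
  also have "\<dots> = T *v (LINT z:C|M. h z)"
    using assms unfolding set_lebesgue_integral_def set_integrable_def
    by (intro integral_bounded_linear matrix_vector_mul_bounded_linear)
  finally show ?thesis .
qed

lemma matrix_vector_mult_diff_set_average:
  fixes T :: "complex^'d^'e" and g :: "'a \<Rightarrow> complex^'d"
  assumes C: "C \<in> sets M" "emeasure M C < \<infinity>" "0 < measure M C" and g: "set_integrable M C g"
  shows "T *v (v - (1 / measure M C) *\<^sub>R (LINT z:C|M. g z))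
    = (1 / measure M C) *\<^sub>R (LINT z:C|M. T *v (v - g z))"
proof -
  have const: "set_integrable M C (\<lambda>_. v)"
    using C by (simp add: set_integrable_def integrable_real_indicator less_top[symmetric])
  have "(LINT z:C|M. T *v (v - g z)) = T *v (measure M C *\<^sub>R v - (LINT z:C|M. g z))"
    using C g const by (simp add: set_integral_matrix_vector_mult set_integral_const)
  then show ?thesis
    using C by (simp add: complex_matrix_vector_mult_scaleR matrix_vector_mult_diff_distrib scaleR_diff_right)
qed

lemma nn_integral_cell_average_error_le:
  fixes W :: "real^'n \<Rightarrow> complex^'d^'d" and g :: "real^'n \<Rightarrow> complex^'d"
  assumes [measurable]: "W \<in> borel_measurable lborel" "g \<in> borel_measurable lborel"
    and p: "1 \<le> p" and \<delta>: "0 < \<delta>" and g_int: "set_integrable lborel (grid_cell \<delta> k) g"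
  shows "(\<integral>\<^sup>+x. indicator (grid_cell \<delta> k) x * ennreal (norm (W x *v (g x - cell_average \<delta> g k)) powr p) \<partial>lborel)
    \<le> ennreal (1 / \<delta> ^ CARD('n)) * (\<integral>\<^sup>+x. \<integral>\<^sup>+z. indicator (grid_cell \<delta> k) x * indicator (grid_cell \<delta> k) z
         * ennreal (norm (W x *v (g x - g z)) powr p) \<partial>lborel \<partial>lborel)"
proof -
  have C: "grid_cell \<delta> k \<in> sets lborel" "emeasure lborel (grid_cell \<delta> k) < \<infinity>" "0 < measure lborel (grid_cell \<delta> k)"
    using \<delta> by (simp_all add: emeasure_grid_cell measure_grid_cell)
  have pointwise: "ennreal (norm (W x *v (g x - cell_average \<delta> g k)) powr p)
      \<le> ennreal (1 / \<delta> ^ CARD('n)) * (\<integral>\<^sup>+z. indicator (grid_cell \<delta> k) z * ennreal (norm (W x *v (g x - g z)) powr p) \<partial>lborel)"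
    for x
  proof -
    have const: "set_integrable lborel (grid_cell \<delta> k) (\<lambda>_. g x)"
      using C by (simp add: set_integrable_def integrable_real_indicator less_top[symmetric])
    have "W x *v (g x - cell_average \<delta> g k)
        = (1 / measure lborel (grid_cell \<delta> k)) *\<^sub>R (LINT z:grid_cell \<delta> k|lborel. W x *v (g x - g z))"
      unfolding cell_average_def using C g_int by (rule matrix_vector_mult_diff_set_average)
    then show ?thesis
      using norm_set_average_powr_le[OF C _ p, of "\<lambda>z. W x *v (g x - g z)"] const g_int \<delta>
      by (simp add: measure_grid_cell set_integrable_matrix_vector_mult)
  qed
  have "(\<integral>\<^sup>+x. indicator (grid_cell \<delta> k) x * ennreal (norm (W x *v (g x - cell_average \<delta> g k)) powr p) \<partial>lborel)
      \<le> (\<integral>\<^sup>+x. ennreal (1 / \<delta> ^ CARD('n)) * (\<integral>\<^sup>+z. indicator (grid_cell \<delta> k) x * indicator (grid_cell \<delta> k) z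
         * ennreal (norm (W x *v (g x - g z)) powr p) \<partial>lborel) \<partial>lborel)"
    using pointwise by (intro nn_integral_mono) (auto simp: indicator_def)
  also have "\<dots> = ennreal (1 / \<delta> ^ CARD('n)) * (\<integral>\<^sup>+x. \<integral>\<^sup>+z. indicator (grid_cell \<delta> k) x * indicator (grid_cell \<delta> k) z
         * ennreal (norm (W x *v (g x - g z)) powr p) \<partial>lborel \<partial>lborel)"
    by (rule nn_integral_cmult) measurable
  finally show ?thesis .
qed

lemma nn_integral_open_cube_differences:
  fixes W :: "real^'n \<Rightarrow> complex^'d^'d" and g :: "real^'n \<Rightarrow> complex^'d"
  assumes [measurable]: "W \<in> borel_measurable lborel" "g \<in> borel_measurable lborel"
  shows "(\<integral>\<^sup>+x. \<integral>\<^sup>+z. indicator (open_cube \<delta>) (x - z) * ennreal (norm (W x *v (g x - g z)) powr p) \<partial>lborel \<partial>lborel)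
    = (\<integral>\<^sup>+y. indicator (open_cube \<delta>) y * weighted_Lp_integral W p (\<lambda>x. g (x - y) - g x) \<partial>lborel)"
proof -
  have "(\<integral>\<^sup>+x. \<integral>\<^sup>+z. indicator (open_cube \<delta>) (x - z) * ennreal (norm (W x *v (g x - g z)) powr p) \<partial>lborel \<partial>lborel)
      = (\<integral>\<^sup>+x. \<integral>\<^sup>+y. indicator (open_cube \<delta>) y * ennreal (norm (W x *v (g x - g (x - y))) powr p) \<partial>lborel \<partial>lborel)"
  proof (rule nn_integral_cong)
    fix x :: "real^'n"
    show "(\<integral>\<^sup>+z. indicator (open_cube \<delta>) (x - z) * ennreal (norm (W x *v (g x - g z)) powr p) \<partial>lborel)
        = (\<integral>\<^sup>+y. indicator (open_cube \<delta>) y * ennreal (norm (W x *v (g x - g (x - y))) powr p) \<partial>lborel)"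
      by (subst nn_integral_lborel_reflect[where x=x]) simp_all
  qed
  also have "\<dots> = (\<integral>\<^sup>+y. \<integral>\<^sup>+x. indicator (open_cube \<delta>) y * ennreal (norm (W x *v (g x - g (x - y))) powr p) \<partial>lborel \<partial>lborel)"
    by (rule lborel_pair.Fubini'[symmetric]) measurable
  also have "\<dots> = (\<integral>\<^sup>+y. indicator (open_cube \<delta>) y * weighted_Lp_integral W p (\<lambda>x. g (x - y) - g x) \<partial>lborel)"
    unfolding weighted_Lp_integral_def
    by (intro nn_integral_cong, subst nn_integral_cmult)
      (simp_all add: norm_minus_commute matrix_vector_mult_diff_distrib)
  finally show ?thesis .
qed

text \<open>Jensen on each cell bounds the averaging error by the mean of \<open>|W x (g x - g z)|^p\<close> over pairs
  \<open>x, z\<close> in a common cell; such pairs differ by a vector in \<open>open_cube \<delta>\<close>, whose volume is \<open>2^n\<close> cells.\<close>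

lemma sum_nn_integral_cell_average_error_le:
  fixes W :: "real^'n \<Rightarrow> complex^'d^'d" and g :: "real^'n \<Rightarrow> complex^'d"
  assumes [measurable]: "W \<in> borel_measurable lborel" "g \<in> borel_measurable lborel"
    and p: "1 \<le> p" and \<delta>: "0 < \<delta>" and g_int: "\<And>k. set_integrable lborel (grid_cell \<delta> k) g"
    and transl: "\<forall>y\<in>open_cube \<delta>. weighted_Lp_integral W p (\<lambda>x. g (x - y) - g x) \<le> ennreal E"
    and K: "finite K"
  shows "(\<Sum>k\<in>K. \<integral>\<^sup>+x. indicator (grid_cell \<delta> k) x * ennreal (norm (W x *v (g x - cell_average \<delta> g k)) powr p) \<partial>lborel)
    \<le> ennreal (2 ^ CARD('n) * E)"
proof -
  define G where "G x z = ennreal (norm (W x *v (g x - g z)) powr p)" for x z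
  have [measurable]: "(\<lambda>(x, z). G x z) \<in> borel_measurable (lborel \<Otimes>\<^sub>M lborel)"
    unfolding G_def by measurable
  have "(\<Sum>k\<in>K. \<integral>\<^sup>+x. indicator (grid_cell \<delta> k) x * ennreal (norm (W x *v (g x - cell_average \<delta> g k)) powr p) \<partial>lborel)
      \<le> (\<Sum>k\<in>K. ennreal (1 / \<delta> ^ CARD('n))
           * (\<integral>\<^sup>+x. \<integral>\<^sup>+z. indicator (grid_cell \<delta> k) x * indicator (grid_cell \<delta> k) z * G x z \<partial>lborel \<partial>lborel))"
    unfolding G_def using p \<delta> g_int by (intro sum_mono nn_integral_cell_average_error_le) auto
  also have "\<dots> = ennreal (1 / \<delta> ^ CARD('n))
      * (\<integral>\<^sup>+x. \<integral>\<^sup>+z. (\<Sum>k\<in>K. indicator (grid_cell \<delta> k) x * indicator (grid_cell \<delta> k) z) * G x z \<partial>lborel \<partial>lborel)"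
  proof -
    have "(\<Sum>k\<in>K. \<integral>\<^sup>+x. \<integral>\<^sup>+z. indicator (grid_cell \<delta> k) x * indicator (grid_cell \<delta> k) z * G x z \<partial>lborel \<partial>lborel)
        = (\<integral>\<^sup>+x. (\<Sum>k\<in>K. \<integral>\<^sup>+z. indicator (grid_cell \<delta> k) x * indicator (grid_cell \<delta> k) z * G x z \<partial>lborel) \<partial>lborel)"
      by (rule nn_integral_sum[symmetric]) measurable
    also have "\<dots> = (\<integral>\<^sup>+x. \<integral>\<^sup>+z. (\<Sum>k\<in>K. indicator (grid_cell \<delta> k) x * indicator (grid_cell \<delta> k) z * G x z) \<partial>lborel \<partial>lborel)"
      by (intro nn_integral_cong nn_integral_sum[symmetric]) measurable
    finally show ?thesis
      by (simp add: sum_distrib_left[symmetric] sum_distrib_right)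
  qed
  also have "\<dots> \<le> ennreal (1 / \<delta> ^ CARD('n))
      * (\<integral>\<^sup>+x. \<integral>\<^sup>+z. indicator (open_cube \<delta>) (x - z) * G x z \<partial>lborel \<partial>lborel)"
    using sum_grid_cells_indicator_le_open_cube[OF K \<delta>]
    by (intro mult_left_mono nn_integral_mono mult_right_mono) auto
  also have "\<dots> = ennreal (1 / \<delta> ^ CARD('n))
      * (\<integral>\<^sup>+y. indicator (open_cube \<delta>) y * weighted_Lp_integral W p (\<lambda>x. g (x - y) - g x) \<partial>lborel)"
    unfolding G_def by (simp add: nn_integral_open_cube_differences)
  also have "\<dots> \<le> ennreal (1 / \<delta> ^ CARD('n)) * (\<integral>\<^sup>+y. ennreal E * indicator (open_cube \<delta>) y \<partial>(lborel :: (real^'n) measure))"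
    using transl by (intro mult_left_mono nn_integral_mono) (auto simp: indicator_def)
  also have "\<dots> = ennreal (1 / \<delta> ^ CARD('n)) * (ennreal E * ennreal ((2 * \<delta>) ^ CARD('n)))"
    using \<delta> by (subst nn_integral_cmult_indicator) (simp_all add: emeasure_open_cube)
  also have "\<dots> = ennreal (2 ^ CARD('n) * E)"
    using \<delta> by (simp add: ennreal_mult'[symmetric] ennreal_mult''[symmetric] power_mult_distrib field_simps)
  finally show ?thesis .
qed

section \<open>Step functions with lattice coefficients\<close>

definition round_grid :: "real \<Rightarrow> complex^'d \<Rightarrow> complex^'d" where
  "round_grid \<eta> v = (\<chi> i. Complex (\<eta> * \<lfloor>Re (v $ i) / \<eta>\<rfloor>) (\<eta> * \<lfloor>Im (v $ i) / \<eta>\<rfloor>))"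

definition grid_points :: "real \<Rightarrow> int \<Rightarrow> (complex^'d) set" where
  "grid_points \<eta> M = (\<lambda>(a :: 'd \<Rightarrow> int, b :: 'd \<Rightarrow> int). \<chi> i. Complex (\<eta> * a i) (\<eta> * b i))
     ` (PiE UNIV (\<lambda>_. {-M..M}) \<times> PiE UNIV (\<lambda>_. {-M..M}))"

lemma finite_grid_points: "finite (grid_points \<eta> M)"
  unfolding grid_points_def by (intro finite_imageI finite_cartesian_product finite_PiE) auto

lemma abs_diff_floor_divide_le:
  fixes t \<eta> :: real
  assumes "0 < \<eta>"
  shows "\<bar>t - \<eta> * \<lfloor>t / \<eta>\<rfloor>\<bar> \<le> \<eta>"
  using floor_divide_lower[OF assms, of t] floor_divide_upper[OF assms, of t] by (simp add: algebra_simps)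

lemma norm_diff_round_grid_le:
  assumes "0 < \<eta>"
  shows "norm (v - round_grid \<eta> (v :: complex^'d)) \<le> 2 * real CARD('d) * \<eta>"
proof -
  have "norm (v - round_grid \<eta> v) \<le> (\<Sum>i\<in>UNIV. norm ((v - round_grid \<eta> v) $ i))"
    by (simp add: norm_vec_def L2_set_le_sum)
  also have "\<dots> \<le> (\<Sum>i\<in>(UNIV :: 'd set). 2 * \<eta>)"
  proof (intro sum_mono)
    fix i
    have "norm ((v - round_grid \<eta> v) $ i) \<le> \<bar>Re ((v - round_grid \<eta> v) $ i)\<bar> + \<bar>Im ((v - round_grid \<eta> v) $ i)\<bar>"
      by (rule cmod_le)
    also have "\<dots> \<le> \<eta> + \<eta>"
      using abs_diff_floor_divide_le[OF assms, of "Re (v $ i)"] abs_diff_floor_divide_le[OF assms, of "Im (v $ i)"]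
      by (simp add: round_grid_def)
    finally show "norm ((v - round_grid \<eta> v) $ i) \<le> 2 * \<eta>"
      by simp
  qed
  finally show ?thesis
    by simp
qed

lemma round_grid_mem_grid_points:
  assumes "0 < \<eta>" "norm v \<le> R"
  shows "round_grid \<eta> (v :: complex^'d) \<in> grid_points \<eta> \<lceil>R / \<eta>\<rceil>"
proof -
  have floor_mem: "\<lfloor>t / \<eta>\<rfloor> \<in> {-\<lceil>R / \<eta>\<rceil>..\<lceil>R / \<eta>\<rceil>}" if "\<bar>t\<bar> \<le> R" for t
  proof -
    have "\<bar>t / \<eta>\<bar> \<le> R / \<eta>"
      using that assms(1) by (simp add: abs_divide divide_right_mono)
    then have "- (R / \<eta>) \<le> t / \<eta>" "t / \<eta> \<le> R / \<eta>"
      by linarith+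
    moreover have "real_of_int \<lfloor>t / \<eta>\<rfloor> \<le> t / \<eta>" "t / \<eta> < real_of_int \<lfloor>t / \<eta>\<rfloor> + 1"
      "R / \<eta> \<le> real_of_int \<lceil>R / \<eta>\<rceil>"
      by linarith+
    ultimately have "- real_of_int \<lceil>R / \<eta>\<rceil> < real_of_int \<lfloor>t / \<eta>\<rfloor> + 1"
      "real_of_int \<lfloor>t / \<eta>\<rfloor> \<le> real_of_int \<lceil>R / \<eta>\<rceil>"
      by linarith+
    then show ?thesis
      by simp
  qed
  have "\<bar>Re (v $ i)\<bar> \<le> R" "\<bar>Im (v $ i)\<bar> \<le> R" for i
    using abs_Re_le_cmod[of "v $ i"] abs_Im_le_cmod[of "v $ i"] Finite_Cartesian_Product.norm_nth_le[of v i] assms(2) by linarith+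
  then have "(\<lambda>i. \<lfloor>Re (v $ i) / \<eta>\<rfloor>) \<in> PiE UNIV (\<lambda>_. {-\<lceil>R / \<eta>\<rceil>..\<lceil>R / \<eta>\<rceil>})"
    "(\<lambda>i. \<lfloor>Im (v $ i) / \<eta>\<rfloor>) \<in> PiE UNIV (\<lambda>_. {-\<lceil>R / \<eta>\<rceil>..\<lceil>R / \<eta>\<rceil>})"
    using floor_mem by (auto simp: PiE_UNIV_domain)
  then show ?thesis
    unfolding grid_points_def round_grid_def by (auto intro!: image_eqI[where x="(_, _)"])
qed

lemma norm_matrix_vector_mult_le_op_norm: "norm (A *v v) \<le> op_norm A * norm v"
  unfolding op_norm_def by (rule onorm[OF matrix_vector_mul_bounded_linear])

definition op_norm_powr_integral :: "(real^'n \<Rightarrow> complex^'d^'d) \<Rightarrow> real \<Rightarrow> real \<Rightarrow> real" where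
  "op_norm_powr_integral W p L = (LINT x:cbox (- (L *\<^sub>R 1)) (L *\<^sub>R 1)|lebesgue. op_norm (W x) powr p)"

lemma op_norm_powr_integral_nonneg: "0 \<le> op_norm_powr_integral W p L"
  unfolding op_norm_powr_integral_def set_lebesgue_integral_def by (intro integral_nonneg_AE) auto

lemma nn_integral_grid_cell_le_op_norm:
  fixes W :: "real^'n \<Rightarrow> complex^'d^'d"
  assumes Wp: "loc_integrable (\<lambda>x. op_norm (W x) powr p)" and p: "0 < p"
    and \<delta>: "0 < \<delta>" and k: "k \<in> central_indices N"
  shows "(\<integral>\<^sup>+x. indicator (grid_cell \<delta> k) x * ennreal (norm (W x *v v) powr p) \<partial>lborel)
    \<le> ennreal (norm v powr p * op_norm_powr_integral W p (\<delta> * N))"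
proof -
  define Q :: "(real^'n) set" where "Q = cbox (- ((\<delta> * N) *\<^sub>R 1)) ((\<delta> * N) *\<^sub>R 1)"
  have "integrable lebesgue (\<lambda>x. indicator Q x * op_norm (W x) powr p)"
    using Wp compact_cbox unfolding loc_integrable_def set_integrable_def Q_def by simp
  then have int: "integrable lebesgue (\<lambda>x. norm v powr p * (indicator Q x * op_norm (W x) powr p))"
    by simp
  have "(\<integral>\<^sup>+x. indicator (grid_cell \<delta> k) x * ennreal (norm (W x *v v) powr p) \<partial>lborel)
      = (\<integral>\<^sup>+x. indicator (grid_cell \<delta> k) x * ennreal (norm (W x *v v) powr p) \<partial>lebesgue)"
    by (rule nn_integral_completion[symmetric])
  also have "\<dots> \<le> (\<integral>\<^sup>+x. ennreal (norm v powr p * (indicator Q x * op_norm (W x) powr p)) \<partial>lebesgue)"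
  proof (intro nn_integral_mono)
    fix x
    show "indicator (grid_cell \<delta> k) x * ennreal (norm (W x *v v) powr p)
        \<le> ennreal (norm v powr p * (indicator Q x * op_norm (W x) powr p))"
    proof (cases "x \<in> grid_cell \<delta> k")
      case True
      then have "x \<in> Q"
        using grid_cell_subset_cbox[OF \<delta> k] by (auto simp: Q_def)
      have "norm (W x *v v) powr p \<le> (op_norm (W x) * norm v) powr p"
        using p norm_matrix_vector_mult_le_op_norm by (intro powr_mono2) auto
      also have "\<dots> = norm v powr p * op_norm (W x) powr p"
        using onorm_pos_le[OF matrix_vector_mul_bounded_linear] by (simp add: op_norm_def powr_mult)
      finally show ?thesis
        using True \<open>x \<in> Q\<close> by (simp add: ennreal_leI)
    qed simp
  qed
  also have "\<dots> = ennreal (norm v powr p * op_norm_powr_integral W p (\<delta> * N))"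
    using int by (subst nn_integral_eq_integral)
      (auto simp: op_norm_powr_integral_def set_lebesgue_integral_def Q_def)
  finally show ?thesis .
qed

definition grid_step :: "real \<Rightarrow> ('n \<Rightarrow> int) set \<Rightarrow> (('n \<Rightarrow> int) \<Rightarrow> 'b::real_vector) \<Rightarrow> real^'n \<Rightarrow> 'b" where
  "grid_step \<delta> K c x = (\<Sum>k\<in>K. indicator (grid_cell \<delta> k) x *\<^sub>R c k)"

lemma borel_measurable_grid_step [measurable]:
  fixes c :: "('n::finite \<Rightarrow> int) \<Rightarrow> 'b::euclidean_space"
  shows "grid_step \<delta> K c \<in> borel_measurable lborel"
  unfolding grid_step_def by measurable

lemma weighted_Lp_integral_grid_step:
  fixes W :: "real^'n \<Rightarrow> complex^'d^'d"
  assumes [measurable]: "W \<in> borel_measurable lborel" and K: "finite K"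
  shows "weighted_Lp_integral W p (grid_step \<delta> K c)
    = (\<Sum>k\<in>K. \<integral>\<^sup>+x. indicator (grid_cell \<delta> k) x * ennreal (norm (W x *v c k) powr p) \<partial>lborel)"
proof -
  have "ennreal (norm (W x *v grid_step \<delta> K c x) powr p)
      = (\<Sum>k\<in>K. indicator (grid_cell \<delta> k) x * ennreal (norm (W x *v c k) powr p))" for x
    using K by (simp only: grid_step_def sum_grid_cells_scaleR sum_grid_cells_mult) simp
  then show ?thesis
    unfolding weighted_Lp_integral_def by (simp add: nn_integral_sum)
qed

lemma weighted_Lp_integral_grid_step_finite:
  fixes W :: "real^'n \<Rightarrow> complex^'d^'d"
  assumes "W \<in> borel_measurable lborel" "loc_integrable (\<lambda>x. op_norm (W x) powr p)" "0 < p" "0 < \<delta>"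
  shows "weighted_Lp_integral W p (grid_step \<delta> (central_indices N) c) < \<infinity>"
proof -
  have "weighted_Lp_integral W p (grid_step \<delta> (central_indices N) c)
      \<le> (\<Sum>k\<in>central_indices N. ennreal (norm (c k) powr p * op_norm_powr_integral W p (\<delta> * N)))"
    using assms by (auto simp: weighted_Lp_integral_grid_step finite_central_indices
        intro!: sum_mono nn_integral_grid_cell_le_op_norm)
  also have "\<dots> < \<infinity>"
    by (simp add: finite_central_indices)
  finally show ?thesis .
qed

lemma sum_nn_integral_grid_cells_le_op_norm:
  fixes W :: "real^'n \<Rightarrow> complex^'d^'d"
  assumes Wp: "loc_integrable (\<lambda>x. op_norm (W x) powr p)" and p: "0 < p" and \<delta>: "0 < \<delta>"
    and small: "\<And>k. k \<in> central_indices N \<Longrightarrow> norm (v k) \<le> \<epsilon>"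
  shows "(\<Sum>k\<in>central_indices N. \<integral>\<^sup>+x. indicator (grid_cell \<delta> k) x * ennreal (norm (W x *v v k) powr p) \<partial>lborel)
    \<le> ennreal (card (central_indices N :: ('n \<Rightarrow> int) set) * \<epsilon> powr p * op_norm_powr_integral W p (\<delta> * N))"
proof -
  have "(\<Sum>k\<in>central_indices N. \<integral>\<^sup>+x. indicator (grid_cell \<delta> k) x * ennreal (norm (W x *v v k) powr p) \<partial>lborel)
      \<le> (\<Sum>k\<in>central_indices N. ennreal (norm (v k) powr p * op_norm_powr_integral W p (\<delta> * N)))"
    using Wp p \<delta> by (intro sum_mono nn_integral_grid_cell_le_op_norm)
  also have "\<dots> \<le> (\<Sum>k\<in>(central_indices N :: ('n \<Rightarrow> int) set). ennreal (\<epsilon> powr p * op_norm_powr_integral W p (\<delta> * N)))"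
    using small p by (intro sum_mono ennreal_leI mult_right_mono powr_mono2 op_norm_powr_integral_nonneg) auto
  also have "\<dots> = ennreal (card (central_indices N :: ('n \<Rightarrow> int) set) * \<epsilon> powr p * op_norm_powr_integral W p (\<delta> * N))"
    by (simp add: ennreal_of_nat_eq_real_of_nat ennreal_mult'' op_norm_powr_integral_nonneg mult.assoc)
  finally show ?thesis .
qed

text \<open>Points outside the cells indexed by \<open>K\<close> lie outside the ball.\<close>

lemma ennreal_norm_diff_grid_step_le:
  fixes A :: "complex^'d^'d" and g :: "real^'n \<Rightarrow> complex^'d" and \<delta> R :: real
  assumes p: "0 < p" and \<delta>: "0 < \<delta>" and K: "K = central_indices \<lceil>R / \<delta>\<rceil>"
  shows "ennreal (norm (A *v (g x - grid_step \<delta> K c' x)) powr p)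
    \<le> ennreal (2 powr p) * ((\<Sum>k\<in>K. indicator (grid_cell \<delta> k) x * ennreal (norm (A *v (g x - c k)) powr p))
        + (\<Sum>k\<in>K. indicator (grid_cell \<delta> k) x * ennreal (norm (A *v (c k - c' k)) powr p)))
      + ennreal (norm (A *v (indicator (- ball 0 R) x *\<^sub>R g x)) powr p)"
proof -
  have fin: "finite K"
    by (simp add: K finite_central_indices)
  show ?thesis
  proof (cases "grid_index \<delta> x \<in> K")
    case True
    define k where "k = grid_index \<delta> x"
    have "A *v (g x - c' k) = A *v (g x - c k) + A *v (c k - c' k)"
      by (simp add: matrix_vector_right_distrib[symmetric])
    then have "norm (A *v (g x - c' k)) \<le> norm (A *v (g x - c k)) + norm (A *v (c k - c' k))"
      by (simp add: norm_triangle_ineq)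
    then have "ennreal (norm (A *v (g x - c' k)) powr p)
        \<le> ennreal (2 powr p) * (ennreal (norm (A *v (g x - c k)) powr p) + ennreal (norm (A *v (c k - c' k)) powr p))"
      using p by (intro ennreal_powr_le_of_le_add) auto
    moreover have "grid_step \<delta> K c' x = c' k"
      using True by (simp add: grid_step_def sum_grid_cells_scaleR[OF fin] k_def)
    ultimately show ?thesis
      using True by (simp add: sum_grid_cells_mult[OF fin] k_def add_increasing2)
  next
    case False
    then have "x \<notin> ball 0 R"
      using grid_index_in_central_indices[OF \<delta>] K by blast
    moreover have "grid_step \<delta> K c' x = 0"
      using False by (simp add: grid_step_def sum_grid_cells_scaleR[OF fin])
    ultimately show ?thesis
      by simp
  qed
qed

lemma weighted_Lp_integral_diff_grid_step_le:
  fixes W :: "real^'n \<Rightarrow> complex^'d^'d" and g :: "real^'n \<Rightarrow> complex^'d" and \<delta> R :: real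
  assumes [measurable]: "W \<in> borel_measurable lborel" "g \<in> borel_measurable lborel"
    and Wp: "loc_integrable (\<lambda>x. op_norm (W x) powr p)" and p: "0 < p" and \<delta>: "0 < \<delta>"
    and K: "K = central_indices \<lceil>R / \<delta>\<rceil>"
    and cells: "(\<Sum>k\<in>K. \<integral>\<^sup>+x. indicator (grid_cell \<delta> k) x * ennreal (norm (W x *v (g x - c k)) powr p) \<partial>lborel)
      \<le> ennreal s"
    and tail: "weighted_Lp_integral W p (\<lambda>x. indicator (- ball 0 R) x *\<^sub>R g x) \<le> ennreal s"
    and close: "\<And>k. k \<in> K \<Longrightarrow> norm (c k - c' k) \<le> \<epsilon>"
  shows "weighted_Lp_integral W p (\<lambda>x. g x - grid_step \<delta> K c' x)
    \<le> ennreal (2 powr p) * (ennreal s + ennreal (card K * \<epsilon> powr p * op_norm_powr_integral W p (\<delta> * \<lceil>R / \<delta>\<rceil>)))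
       + ennreal s"
proof -
  define A1 where "A1 x = (\<Sum>k\<in>K. indicator (grid_cell \<delta> k) x * ennreal (norm (W x *v (g x - c k)) powr p))" for x
  define A2 where "A2 x = (\<Sum>k\<in>K. indicator (grid_cell \<delta> k) x * ennreal (norm (W x *v (c k - c' k)) powr p))" for x
  define A3 where "A3 x = ennreal (norm (W x *v (indicator (- ball 0 R) x *\<^sub>R g x)) powr p)" for x
  have [measurable]: "A1 \<in> borel_measurable lborel"
    unfolding A1_def by measurable
  have [measurable]: "A2 \<in> borel_measurable lborel"
    unfolding A2_def by measurable
  have [measurable]: "A3 \<in> borel_measurable lborel"
    unfolding A3_def by measurable
  have "weighted_Lp_integral W p (\<lambda>x. g x - grid_step \<delta> K c' x) \<le> (\<integral>\<^sup>+x. ennreal (2 powr p) * (A1 x + A2 x) + A3 x \<partial>lborel)"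
    unfolding weighted_Lp_integral_def A1_def A2_def A3_def
    by (intro nn_integral_mono ennreal_norm_diff_grid_step_le[OF p \<delta> K])
  also have "\<dots> = ennreal (2 powr p) * (integral\<^sup>N lborel A1 + integral\<^sup>N lborel A2) + integral\<^sup>N lborel A3"
    by (simp add: nn_integral_add nn_integral_cmult)
  also have "\<dots> \<le> ennreal (2 powr p) * (ennreal s + ennreal (card K * \<epsilon> powr p * op_norm_powr_integral W p (\<delta> * \<lceil>R / \<delta>\<rceil>)))
       + ennreal s"
  proof (intro add_mono mult_left_mono order_refl)
    show "integral\<^sup>N lborel A1 \<le> ennreal s"
      using cells unfolding A1_def by (subst nn_integral_sum) auto
    show "integral\<^sup>N lborel A2 \<le> ennreal (card K * \<epsilon> powr p * op_norm_powr_integral W p (\<delta> * \<lceil>R / \<delta>\<rceil>))"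
      unfolding A2_def K using close K
      by (subst nn_integral_sum) (auto intro!: sum_nn_integral_grid_cells_le_op_norm[OF Wp p \<delta>])
    show "integral\<^sup>N lborel A3 \<le> ennreal s"
      using tail by (simp add: A3_def[abs_def] weighted_Lp_integral_def)
  qed simp
  finally show ?thesis .
qed

lemma norm_le_of_weighted_approximation:
  fixes W :: "real^'n \<Rightarrow> complex^'d^'d" and g :: "real^'n \<Rightarrow> complex^'d"
  assumes [measurable]: "W \<in> borel_measurable lborel" "g \<in> borel_measurable lborel" "S \<in> sets lborel"
    and p: "0 < p" and \<alpha>: "0 < \<alpha>"
    and coercive: "ennreal (\<alpha> * norm c powr p) \<le> (\<integral>\<^sup>+x. indicator S x * ennreal (norm (W x *v c) powr p) \<partial>lborel)"
    and bounded: "weighted_Lp_integral W p g \<le> ennreal B" "0 \<le> B"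
    and close: "(\<integral>\<^sup>+x. indicator S x * ennreal (norm (W x *v (g x - c)) powr p) \<partial>lborel) \<le> ennreal s" "0 \<le> s"
  shows "norm c \<le> (2 powr p * (B + s) / \<alpha>) powr (1 / p)"
proof -
  have "ennreal (\<alpha> * norm c powr p)
      \<le> (\<integral>\<^sup>+x. ennreal (2 powr p) * (ennreal (norm (W x *v g x) powr p)
           + indicator S x * ennreal (norm (W x *v (g x - c)) powr p)) \<partial>lborel)"
  proof (rule order_trans[OF coercive nn_integral_mono])
    fix x
    have "W x *v c = W x *v g x - W x *v (g x - c)"
      by (simp add: matrix_vector_mult_diff_distrib)
    then have "norm (W x *v c) \<le> norm (W x *v g x) + norm (W x *v (g x - c))"
      by (simp add: norm_triangle_ineq4)
    then have "ennreal (norm (W x *v c) powr p)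
        \<le> ennreal (2 powr p) * (ennreal (norm (W x *v g x) powr p) + ennreal (norm (W x *v (g x - c)) powr p))"
      using p by (intro ennreal_powr_le_of_le_add) auto
    then show "indicator S x * ennreal (norm (W x *v c) powr p)
        \<le> ennreal (2 powr p) * (ennreal (norm (W x *v g x) powr p) + indicator S x * ennreal (norm (W x *v (g x - c)) powr p))"
      by (cases "x \<in> S") auto
  qed
  also have "\<dots> = ennreal (2 powr p) * (weighted_Lp_integral W p g
      + (\<integral>\<^sup>+x. indicator S x * ennreal (norm (W x *v (g x - c)) powr p) \<partial>lborel))"
    unfolding weighted_Lp_integral_def by (simp add: nn_integral_add nn_integral_cmult)
  also have "\<dots> \<le> ennreal (2 powr p) * (ennreal B + ennreal s)"
    using bounded(1) close(1) by (intro mult_left_mono add_mono) auto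
  also have "\<dots> = ennreal (2 powr p * (B + s))"
    using bounded(2) close(2) by (simp add: ennreal_mult ennreal_plus)
  finally have "\<alpha> * norm c powr p \<le> 2 powr p * (B + s)"
    using bounded close by (simp add: ennreal_le_iff)
  then have "norm c powr p \<le> 2 powr p * (B + s) / \<alpha>"
    using \<alpha> by (simp add: pos_le_divide_eq mult.commute)
  then have "(norm c powr p) powr (1 / p) \<le> (2 powr p * (B + s) / \<alpha>) powr (1 / p)"
    using p by (intro powr_mono2) auto
  then show ?thesis
    using p by (simp add: powr_powr)
qed

lemma exists_close_grid_step:
  fixes W :: "real^'n \<Rightarrow> complex^'d^'d" and g :: "real^'n \<Rightarrow> complex^'d" and \<delta> R \<eta> :: real
  assumes W: "W \<in> borel_measurable lborel" and inj: "AE x in lborel. \<forall>v. v \<noteq> 0 \<longrightarrow> W x *v v \<noteq> 0"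
    and Wp: "loc_integrable (\<lambda>x. op_norm (W x) powr p)" and p: "1 \<le> p" and \<delta>: "0 < \<delta>" and \<eta>: "0 < \<eta>"
    and g: "g \<in> borel_measurable lborel" and bounded: "weighted_Lp_integral W p g \<le> ennreal B" "0 \<le> B"
    and transl: "\<forall>y\<in>open_cube \<delta>. weighted_Lp_integral W p (\<lambda>x. g (x - y) - g x) \<le> ennreal (s / 2 ^ CARD('n))"
    and tail: "weighted_Lp_integral W p (\<lambda>x. indicator (- ball 0 R) x *\<^sub>R g x) \<le> ennreal s" and s: "0 \<le> s"
    and K: "K = central_indices \<lceil>R / \<delta>\<rceil>"
    and fine: "card K * (2 * real CARD('d) * \<eta>) powr p * op_norm_powr_integral W p (\<delta> * \<lceil>R / \<delta>\<rceil>) \<le> s"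
    and \<alpha>: "\<And>k. 0 < \<alpha> k"
      "\<And>k v. ennreal (\<alpha> k * norm v powr p) \<le> (\<integral>\<^sup>+x. indicator (grid_cell \<delta> k) x * ennreal (norm (W x *v v) powr p) \<partial>lborel)"
  shows "\<exists>c\<in>PiE K (\<lambda>k. grid_points \<eta> \<lceil>(2 powr p * (B + s) / \<alpha> k) powr (1 / p) / \<eta>\<rceil>).
    weighted_Lp_integral W p (\<lambda>x. g x - grid_step \<delta> K c x) \<le> ennreal (3 * 2 powr p * s)"
proof -
  note [measurable] = W g
  have fin: "finite K"
    by (simp add: K finite_central_indices)
  have g_fin: "weighted_Lp_integral W p g < \<infinity>"
    using bounded(1) by (simp add: le_less_trans)
  have g_int: "set_integrable lborel (grid_cell \<delta> k) g" for k
    by (rule set_integrable_grid_cell[OF W inj p \<delta> g g_fin transl])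
  have cells: "(\<Sum>k\<in>K. \<integral>\<^sup>+x. indicator (grid_cell \<delta> k) x * ennreal (norm (W x *v (g x - cell_average \<delta> g k)) powr p) \<partial>lborel)
      \<le> ennreal s"
    using sum_nn_integral_cell_average_error_le[OF W g p \<delta> g_int transl fin] by simp
  define c where "c = restrict (\<lambda>k. round_grid \<eta> (cell_average \<delta> g k)) K"
  have "c k \<in> grid_points \<eta> \<lceil>(2 powr p * (B + s) / \<alpha> k) powr (1 / p) / \<eta>\<rceil>" if "k \<in> K" for k
  proof -
    have "(\<integral>\<^sup>+x. indicator (grid_cell \<delta> k) x * ennreal (norm (W x *v (g x - cell_average \<delta> g k)) powr p) \<partial>lborel)
        \<le> ennreal s"
      using cells by (rule order_trans[OF member_le_sum[OF that _ fin], rotated]) simp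
    then have "norm (cell_average \<delta> g k) \<le> (2 powr p * (B + s) / \<alpha> k) powr (1 / p)"
      using p \<alpha> bounded s by (intro norm_le_of_weighted_approximation[OF W g sets_grid_cell]) auto
    then show ?thesis
      using that by (simp add: c_def round_grid_mem_grid_points \<eta>)
  qed
  then have c: "c \<in> PiE K (\<lambda>k. grid_points \<eta> \<lceil>(2 powr p * (B + s) / \<alpha> k) powr (1 / p) / \<eta>\<rceil>)"
    by (simp add: c_def)
  have "weighted_Lp_integral W p (\<lambda>x. g x - grid_step \<delta> K c x)
      \<le> ennreal (2 powr p) * (ennreal s + ennreal (card K * (2 * real CARD('d) * \<eta>) powr p
           * op_norm_powr_integral W p (\<delta> * \<lceil>R / \<delta>\<rceil>))) + ennreal s"
    using p \<delta> norm_diff_round_grid_le[OF \<eta>]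
    by (intro weighted_Lp_integral_diff_grid_step_le[OF W g Wp _ \<delta> K cells tail]) (auto simp: c_def)
  also have "\<dots> \<le> ennreal (2 powr p) * (ennreal s + ennreal s) + ennreal s"
    using fine by (intro add_mono mult_left_mono ennreal_leI) auto
  also have "\<dots> \<le> ennreal (3 * 2 powr p * s)"
  proof -
    have "s * 1 \<le> s * 2 powr p"
      using s p by (intro mult_left_mono ge_one_powr_ge_zero) auto
    then have "2 powr p * (s + s) + s \<le> 3 * 2 powr p * s"
      by (simp add: algebra_simps)
    then show ?thesis
      using s by (simp add: ennreal_mult[symmetric] ennreal_plus[symmetric] ennreal_leI del: ennreal_plus)
  qed
  finally show ?thesis
    using c by blast
qed

section \<open>A finite net for the weighted integral\<close>

lemma exists_pos_powr_le:
  fixes s I :: real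
  assumes s: "0 < s" and I: "0 \<le> I" and p: "0 < p"
  shows "\<exists>\<epsilon>>0. real n * \<epsilon> powr p * I \<le> s"
proof -
  define \<epsilon> where "\<epsilon> = (s / ((n + 1) * (I + 1))) powr (1 / p)"
  have "real n * I \<le> (real n + 1) * (I + 1)"
    using I by (intro mult_mono) auto
  then have "n * I / ((n + 1) * (I + 1)) \<le> 1"
    using I by (simp add: divide_le_eq_1_pos add.commute)
  then have "s * (n * I / ((n + 1) * (I + 1))) \<le> s"
    by (rule mult_left_le) (use s in simp)
  moreover have "real n * \<epsilon> powr p * I = s * (n * I / ((n + 1) * (I + 1)))"
    using s I p by (simp add: \<epsilon>_def powr_powr)
  moreover have "0 < \<epsilon>"
    using s I by (simp add: \<epsilon>_def)
  ultimately show ?thesis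
    by auto
qed

lemma grid_cells_coercive:
  fixes W :: "real^'n \<Rightarrow> complex^'d^'d"
  assumes W: "W \<in> borel_measurable lborel" and inj: "AE x in lborel. \<forall>v. v \<noteq> 0 \<longrightarrow> W x *v v \<noteq> 0"
    and \<delta>: "0 < \<delta>" and p: "0 < p"
  obtains \<alpha> where "\<And>k. 0 < \<alpha> k"
    "\<And>k v. ennreal (\<alpha> k * norm v powr p) \<le> (\<integral>\<^sup>+x. indicator (grid_cell \<delta> k) x * ennreal (norm (W x *v v) powr p) \<partial>lborel)"
proof -
  have "\<forall>k. \<exists>\<alpha>>0. \<forall>v. ennreal (\<alpha> * norm v powr p)
      \<le> (\<integral>\<^sup>+x. indicator (grid_cell \<delta> k) x * ennreal (norm (W x *v v) powr p) \<partial>lborel)"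
  proof
    fix k
    show "\<exists>\<alpha>>0. \<forall>v. ennreal (\<alpha> * norm v powr p)
        \<le> (\<integral>\<^sup>+x. indicator (grid_cell \<delta> k) x * ennreal (norm (W x *v v) powr p) \<partial>lborel)"
      using nn_integral_matrix_norm_powr_coercive[OF W inj sets_grid_cell, of \<delta> k p]
        emeasure_grid_cell[OF \<delta>, of k] \<delta> p
      by simp
  qed
  then show ?thesis
    using that by (subst (asm) choice_iff) blast
qed

theorem weighted_Lp_finite_net:
  fixes W :: "real^'n \<Rightarrow> complex^'d^'d" and F :: "(real^'n \<Rightarrow> complex^'d) set"
  assumes W: "W \<in> borel_measurable lborel" and inj: "AE x in lborel. \<forall>v. v \<noteq> 0 \<longrightarrow> W x *v v \<noteq> 0"
    and Wp: "loc_integrable (\<lambda>x. op_norm (W x) powr p)" and p: "1 \<le> p"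
    and borel_versions: "\<And>f. f \<in> F \<Longrightarrow> \<exists>g\<in>borel_measurable lborel. AE x in lborel. f x = g x"
    and bounded: "\<And>f. f \<in> F \<Longrightarrow> weighted_Lp_integral W p f \<le> ennreal B" "0 \<le> B"
    and tails: "\<And>t. 0 < t \<Longrightarrow> \<exists>R. \<forall>f\<in>F. weighted_Lp_integral W p (\<lambda>x. indicator (- ball 0 R) x *\<^sub>R f x) \<le> ennreal t"
    and translates: "\<And>t. 0 < t \<Longrightarrow>
      \<exists>r>0. \<forall>f\<in>F. \<forall>y\<in>ball 0 r. weighted_Lp_integral W p (\<lambda>x. f (x - y) - f x) \<le> ennreal t"
    and t: "0 < t"
  shows "\<exists>N. finite N \<and> (\<forall>G\<in>N. G \<in> borel_measurable lborel \<and> weighted_Lp_integral W p G < \<infinity>) \<and>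
    (\<forall>f\<in>F. \<exists>G\<in>N. weighted_Lp_integral W p (\<lambda>x. f x - G x) \<le> ennreal t)"
proof -
  have p0: "0 < p"
    using p by simp
  define s where "s = t / (3 * 2 powr p)"
  have s: "0 < s" "3 * 2 powr p * s = t"
    using t by (simp_all add: s_def)
  obtain R where R: "\<forall>f\<in>F. weighted_Lp_integral W p (\<lambda>x. indicator (- ball 0 R) x *\<^sub>R f x) \<le> ennreal s"
    using tails[OF s(1)] by blast
  obtain r where r: "0 < r" "\<forall>f\<in>F. \<forall>y\<in>ball 0 r. weighted_Lp_integral W p (\<lambda>x. f (x - y) - f x) \<le> ennreal (s / 2 ^ CARD('n))"
    using translates[of "s / 2 ^ CARD('n)"] s(1) by auto
  define \<delta> where "\<delta> = r / CARD('n)"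
  have \<delta>: "0 < \<delta>" "open_cube \<delta> \<subseteq> ball (0 :: real^'n) r"
    using r(1) open_cube_subset_ball[of \<delta>] by (auto simp: \<delta>_def)
  define K :: "('n \<Rightarrow> int) set" where "K = central_indices \<lceil>R / \<delta>\<rceil>"
  obtain \<epsilon> where \<epsilon>: "0 < \<epsilon>" "card K * \<epsilon> powr p * op_norm_powr_integral W p (\<delta> * \<lceil>R / \<delta>\<rceil>) \<le> s"
    using exists_pos_powr_le[OF s(1) op_norm_powr_integral_nonneg[of W p "\<delta> * \<lceil>R / \<delta>\<rceil>"] p0, of "card K"]
    by auto
  define \<eta> where "\<eta> = \<epsilon> / (2 * CARD('d))"
  have \<eta>: "0 < \<eta>" "2 * real CARD('d) * \<eta> = \<epsilon>"
    using \<epsilon>(1) by (simp_all add: \<eta>_def)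
  obtain \<alpha> where \<alpha>: "\<And>k. 0 < \<alpha> k"
    "\<And>k v. ennreal (\<alpha> k * norm v powr p) \<le> (\<integral>\<^sup>+x. indicator (grid_cell \<delta> k) x * ennreal (norm (W x *v v) powr p) \<partial>lborel)"
    by (rule grid_cells_coercive[OF W inj \<delta>(1) p0]) blast
  define N :: "(real^'n \<Rightarrow> complex^'d) set"
    where "N = grid_step \<delta> K ` PiE K (\<lambda>k. grid_points \<eta> \<lceil>(2 powr p * (B + s) / \<alpha> k) powr (1 / p) / \<eta>\<rceil>)"
  show ?thesis
  proof (intro exI[of _ N] conjI ballI)
    show "finite N"
      unfolding N_def by (intro finite_imageI finite_PiE) (simp_all add: K_def finite_central_indices finite_grid_points)
  next
    fix G
    assume "G \<in> N"
    then obtain c where "G = grid_step \<delta> K c"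
      by (auto simp: N_def)
    then show "G \<in> borel_measurable lborel" "weighted_Lp_integral W p G < \<infinity>"
      using weighted_Lp_integral_grid_step_finite[OF W Wp _ \<delta>(1)] p by (auto simp: K_def)
  next
    fix f
    assume f: "f \<in> F"
    obtain g where g: "g \<in> borel_measurable lborel" "AE x in lborel. g x = f x"
      using borel_versions[OF f] by (auto simp: eq_commute)
    have g_bounds: "weighted_Lp_integral W p g \<le> ennreal B"
      "weighted_Lp_integral W p (\<lambda>x. indicator (- ball 0 R) x *\<^sub>R g x) \<le> ennreal s"
      "\<forall>y\<in>open_cube \<delta>. weighted_Lp_integral W p (\<lambda>x. g (x - y) - g x) \<le> ennreal (s / 2 ^ CARD('n))"
      using bounded(1)[OF f] R r(2) f \<delta>(2)
      by (auto simp: weighted_Lp_integral_cong_AE[OF g(2)] weighted_Lp_integral_indicator_cong_AE[OF g(2)]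
          weighted_Lp_integral_translate_diff_cong_AE[OF g(2)])
    obtain c where c: "c \<in> PiE K (\<lambda>k. grid_points \<eta> \<lceil>(2 powr p * (B + s) / \<alpha> k) powr (1 / p) / \<eta>\<rceil>)"
      "weighted_Lp_integral W p (\<lambda>x. g x - grid_step \<delta> K c x) \<le> ennreal t"
      using exists_close_grid_step[OF W inj Wp p \<delta>(1) \<eta>(1) g(1) g_bounds(1) bounded(2) g_bounds(3,2)
          less_imp_le[OF s(1)] K_def \<epsilon>(2)[folded \<eta>(2)] \<alpha>] s(2)
      by auto
    have "weighted_Lp_integral W p (\<lambda>x. f x - grid_step \<delta> K c x) \<le> ennreal t"
      using c(2) by (simp add: weighted_Lp_integral_diff_cong_AE[OF g(2)])
    moreover have "grid_step \<delta> K c \<in> N"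
      using c(1) by (simp add: N_def)
    ultimately show "\<exists>G\<in>N. weighted_Lp_integral W p (\<lambda>x. f x - G x) \<le> ennreal t"
      by blast
  qed
qed

section \<open>Comparing \<open>\<rho>\<close> with the matrix weight\<close>

lemma loc_integrable_cong_AE:
  assumes "loc_integrable f" "AE x in lebesgue. f x = g x"
  shows "loc_integrable g"
  unfolding loc_integrable_def
proof (intro allI impI)
  fix K :: "'a set"
  assume "compact K"
  then have int: "integrable lebesgue (\<lambda>x. indicator K x *\<^sub>R f x)"
    using assms(1) by (simp add: loc_integrable_def set_integrable_def)
  have AE: "AE x in lebesgue. indicator K x *\<^sub>R f x = indicator K x *\<^sub>R g x"
    using assms(2) by eventually_elim simp
  have "(\<lambda>x. indicator K x *\<^sub>R g x) \<in> borel_measurable lebesgue"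
    by (rule borel_measurable_AE[OF borel_measurable_integrable[OF int] AE])
  then show "set_integrable lebesgue K g"
    unfolding set_integrable_def by (rule integrable_cong_AE_imp[OF int _ AE])
qed

lemma matrix_weight_borel_version:
  fixes W :: "'a::euclidean_space \<Rightarrow> complex^'d^'d"
  assumes "matrix_weight W" "\<forall>x. pos_def_sa (W x)" "loc_integrable (\<lambda>x. op_norm (W x) powr p)"
  obtains W' where "W' \<in> borel_measurable lborel" "AE x in lborel. W x = W' x"
    "AE x in lborel. \<forall>v. v \<noteq> 0 \<longrightarrow> W' x *v v \<noteq> 0" "loc_integrable (\<lambda>x. op_norm (W' x) powr p)"
proof -
  have "W \<in> borel_measurable lebesgue"
    using assms(1) by (intro borel_measurable_vecI) (simp add: matrix_weight_def)
  then obtain W' where W': "W' \<in> borel_measurable lborel" "AE x in lborel. W x = W' x"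
    using completion_ex_borel_measurable_euclidean by blast
  moreover have "AE x in lborel. \<forall>v. v \<noteq> 0 \<longrightarrow> W' x *v v \<noteq> 0"
    using W'(2)
  proof eventually_elim
    case (elim x)
    have "W x *v v \<noteq> 0" if "v \<noteq> 0" for v
    proof -
      have "0 < Re (cinner v (W x *v v))"
        using assms(2) that by (simp add: pos_def_sa_def)
      then show ?thesis
        by (auto simp: cinner_def)
    qed
    then show ?case
      using elim by simp
  qed
  moreover have "loc_integrable (\<lambda>x. op_norm (W' x) powr p)"
    using AE_completion[OF W'(2)] by (intro loc_integrable_cong_AE[OF assms(3)]) auto
  ultimately show ?thesis
    using that by blast
qed

lemma nn_integral_rho_le_of_Lp_rho_norm_le:
  assumes "Lp_rho_norm p \<rho> h \<le> ennreal e" "0 \<le> e" "0 < p"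
  shows "(\<integral>\<^sup>+x. ennreal (\<rho> x (h x) powr p) \<partial>lebesgue) \<le> ennreal (e powr p)"
proof -
  define I where "I = (\<integral>\<^sup>+x. ennreal (\<rho> x (h x) powr p) \<partial>lebesgue)"
  have "I \<noteq> \<infinity>"
    using assms(1) by (auto simp: Lp_rho_norm_def I_def[symmetric] top_unique)
  then have "enn2real I powr (1 / p) \<le> e"
    using assms(1,2) by (simp add: Lp_rho_norm_def I_def[symmetric])
  then have "(enn2real I powr (1 / p)) powr p \<le> e powr p"
    using assms(3) by (intro powr_mono2) auto
  then have "enn2real I \<le> e powr p"
    using assms(3) by (simp add: powr_powr)
  then have "ennreal (enn2real I) \<le> ennreal (e powr p)"
    by (rule ennreal_leI)
  moreover have "ennreal (enn2real I) = I"
    using \<open>I \<noteq> \<infinity>\<close> by (simp add: less_top)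
  ultimately have "I \<le> ennreal (e powr p)"
    by metis
  then show ?thesis
    by (simp only: I_def)
qed

lemma Lp_rho_norm_less_of_nn_integral_rho_less:
  assumes "(\<integral>\<^sup>+x. ennreal (\<rho> x (h x) powr p) \<partial>lebesgue) < ennreal (e powr p)" "0 < e" "0 < p"
  shows "Lp_rho_norm p \<rho> h < ennreal e"
proof -
  define I where "I = (\<integral>\<^sup>+x. ennreal (\<rho> x (h x) powr p) \<partial>lebesgue)"
  have "I \<noteq> \<infinity>"
    using assms(1) by (auto simp: I_def[symmetric])
  then have "ennreal (enn2real I) < ennreal (e powr p)"
    using assms(1) by (simp add: I_def[symmetric] less_top)
  then have "enn2real I < e powr p"
    by (simp add: ennreal_less_iff)
  then have "enn2real I powr (1 / p) < (e powr p) powr (1 / p)"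
    using assms(3) by (intro powr_less_mono2) auto
  then have "enn2real I powr (1 / p) < e"
    using assms(2,3) by (simp add: powr_powr)
  then show ?thesis
    using \<open>I \<noteq> \<infinity>\<close> assms(2) by (simp add: Lp_rho_norm_def I_def[symmetric] ennreal_lessI)
qed

locale rho_weight_comparison =
  fixes \<rho> :: "'a::euclidean_space \<Rightarrow> complex^'d \<Rightarrow> real" and W W' :: "'a \<Rightarrow> complex^'d^'d" and C p :: real
  assumes lower: "\<And>x v. \<rho> x v \<le> norm (W x *v v)"
    and upper: "\<And>x v. norm (W x *v v) \<le> C * \<rho> x v"
    and borel_version: "AE x in lborel. W x = W' x"
    and C_pos: "0 < C" and p_pos: "0 < p"
    and rho_meas: "\<And>f. f \<in> borel_measurable lebesgue \<Longrightarrow> (\<lambda>x. \<rho> x (f x)) \<in> borel_measurable lebesgue"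
begin

lemma rho_nonneg: "0 \<le> \<rho> x v"
  using order_trans[OF norm_ge_zero upper] C_pos by (simp add: zero_le_mult_iff)

lemma nn_integral_rho_le_weighted_Lp_integral:
  "(\<integral>\<^sup>+x. ennreal (\<rho> x (h x) powr p) \<partial>lebesgue) \<le> weighted_Lp_integral W' p h"
proof -
  have "(\<integral>\<^sup>+x. ennreal (\<rho> x (h x) powr p) \<partial>lebesgue) \<le> (\<integral>\<^sup>+x. ennreal (norm (W x *v h x) powr p) \<partial>lebesgue)"
    using lower rho_nonneg p_pos by (intro nn_integral_mono ennreal_leI powr_mono2) auto
  also have "\<dots> = (\<integral>\<^sup>+x. ennreal (norm (W x *v h x) powr p) \<partial>lborel)"
    by (rule nn_integral_completion)
  also have "\<dots> = weighted_Lp_integral W' p h"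
    unfolding weighted_Lp_integral_def using borel_version by (intro nn_integral_cong_AE) auto
  finally show ?thesis .
qed

lemma weighted_Lp_integral_le_nn_integral_rho:
  assumes g: "g \<in> borel_measurable lborel" "AE x in lborel. h x = g x"
  shows "weighted_Lp_integral W' p h \<le> ennreal (C powr p) * (\<integral>\<^sup>+x. ennreal (\<rho> x (h x) powr p) \<partial>lebesgue)"
proof -
  have [measurable]: "(\<lambda>x. \<rho> x (g x)) \<in> borel_measurable lebesgue"
    using rho_meas g(1) measurable_completion by blast
  have "weighted_Lp_integral W' p h = (\<integral>\<^sup>+x. ennreal (norm (W x *v g x) powr p) \<partial>lborel)"
    unfolding weighted_Lp_integral_def using borel_version g(2) by (intro nn_integral_cong_AE) auto
  also have "\<dots> = (\<integral>\<^sup>+x. ennreal (norm (W x *v g x) powr p) \<partial>lebesgue)"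
    by (rule nn_integral_completion[symmetric])
  also have "\<dots> \<le> (\<integral>\<^sup>+x. ennreal (C powr p) * ennreal (\<rho> x (g x) powr p) \<partial>lebesgue)"
  proof (intro nn_integral_mono)
    fix x
    have "norm (W x *v g x) powr p \<le> (C * \<rho> x (g x)) powr p"
      using upper p_pos by (intro powr_mono2) auto
    also have "\<dots> = C powr p * \<rho> x (g x) powr p"
      using C_pos rho_nonneg by (simp add: powr_mult)
    finally show "ennreal (norm (W x *v g x) powr p) \<le> ennreal (C powr p) * ennreal (\<rho> x (g x) powr p)"
      by (simp add: ennreal_mult[symmetric] ennreal_leI)
  qed
  also have "\<dots> = ennreal (C powr p) * (\<integral>\<^sup>+x. ennreal (\<rho> x (g x) powr p) \<partial>lebesgue)"
    by (rule nn_integral_cmult) measurable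
  also have "(\<integral>\<^sup>+x. ennreal (\<rho> x (g x) powr p) \<partial>lebesgue) = (\<integral>\<^sup>+x. ennreal (\<rho> x (h x) powr p) \<partial>lebesgue)"
  proof (rule nn_integral_cong_AE)
    show "AE x in lebesgue. ennreal (\<rho> x (g x) powr p) = ennreal (\<rho> x (h x) powr p)"
      using AE_completion[OF g(2)] by eventually_elim simp
  qed
  finally show ?thesis .
qed

lemma weighted_Lp_integral_le_of_Lp_rho_norm_le:
  assumes g: "g \<in> borel_measurable lborel" "AE x in lborel. h x = g x"
    and small: "Lp_rho_norm p \<rho> h \<le> ennreal ((t / C powr p) powr (1 / p))" and t: "0 \<le> t"
  shows "weighted_Lp_integral W' p h \<le> ennreal t"
proof -
  have "weighted_Lp_integral W' p h \<le> ennreal (C powr p) * (\<integral>\<^sup>+x. ennreal (\<rho> x (h x) powr p) \<partial>lebesgue)"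
    by (rule weighted_Lp_integral_le_nn_integral_rho[OF g])
  also have "\<dots> \<le> ennreal (C powr p) * ennreal (((t / C powr p) powr (1 / p)) powr p)"
    using C_pos t p_pos by (intro mult_left_mono nn_integral_rho_le_of_Lp_rho_norm_le[OF small]) auto
  also have "\<dots> = ennreal (C powr p * (t / C powr p))"
    using C_pos t p_pos by (simp add: powr_powr ennreal_mult[symmetric])
  also have "\<dots> = ennreal t"
    using C_pos by simp
  finally show ?thesis .
qed

lemma weighted_Lp_bounded_if_Lp_rho_bounded:
  assumes borel_versions: "\<And>f. f \<in> F \<Longrightarrow> \<exists>g\<in>borel_measurable lborel. AE x in lborel. f x = g x"
    and bounded: "\<exists>M. \<forall>f\<in>F. Lp_rho_norm p \<rho> f \<le> M \<and> M < \<infinity>"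
  shows "\<exists>B\<ge>0. \<forall>f\<in>F. weighted_Lp_integral W' p f \<le> ennreal B"
proof -
  obtain M where M: "\<forall>f\<in>F. Lp_rho_norm p \<rho> f \<le> M \<and> M < \<infinity>"
    using bounded by blast
  define B where "B = C powr p * enn2real M powr p"
  have "0 \<le> B"
    by (simp add: B_def)
  have "B / C powr p = enn2real M powr p"
    using C_pos by (simp add: B_def)
  then have root_B: "(B / C powr p) powr (1 / p) = enn2real M"
    using p_pos by (simp add: powr_powr)
  have "weighted_Lp_integral W' p f \<le> ennreal B" if f: "f \<in> F" for f
  proof -
    obtain g where g: "g \<in> borel_measurable lborel" "AE x in lborel. f x = g x"
      using borel_versions[OF f] by blast
    have "Lp_rho_norm p \<rho> f \<le> ennreal ((B / C powr p) powr (1 / p))"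
      using M f by (simp add: root_B less_top)
    then show ?thesis
      by (rule weighted_Lp_integral_le_of_Lp_rho_norm_le[OF g _ \<open>0 \<le> B\<close>])
  qed
  then show ?thesis
    using \<open>0 \<le> B\<close> by blast
qed

lemma weighted_Lp_tails_if_Lp_rho_tails:
  assumes borel_versions: "\<And>f. f \<in> F \<Longrightarrow> \<exists>g\<in>borel_measurable lborel. AE x in lborel. f x = g x"
    and tails: "\<forall>e>0. \<exists>R0. \<forall>R\<ge>R0. \<forall>f\<in>F. Lp_rho_norm p \<rho> (\<lambda>x. indicator (- ball 0 R) x *\<^sub>R f x) \<le> ennreal e"
    and t: "0 < t"
  shows "\<exists>R. \<forall>f\<in>F. weighted_Lp_integral W' p (\<lambda>x. indicator (- ball 0 R) x *\<^sub>R f x) \<le> ennreal t"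
proof -
  have "0 < (t / C powr p) powr (1 / p)"
    using C_pos t by simp
  from tails[rule_format, OF this] obtain R where "\<forall>R'\<ge>R. \<forall>f\<in>F. Lp_rho_norm p \<rho> (\<lambda>x. indicator (- ball 0 R') x *\<^sub>R f x)
      \<le> ennreal ((t / C powr p) powr (1 / p))"
    by blast
  then have R: "\<forall>f\<in>F. Lp_rho_norm p \<rho> (\<lambda>x. indicator (- ball 0 R) x *\<^sub>R f x)
      \<le> ennreal ((t / C powr p) powr (1 / p))"
    by simp
  have "weighted_Lp_integral W' p (\<lambda>x. indicator (- ball 0 R) x *\<^sub>R f x) \<le> ennreal t" if f: "f \<in> F" for f
  proof -
    obtain g where g: "g \<in> borel_measurable lborel" "AE x in lborel. f x = g x"
      using borel_versions[OF f] by blast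
    have "AE x in lborel. indicator (- ball 0 R) x *\<^sub>R f x = indicator (- ball 0 R) x *\<^sub>R g x"
      using g(2) by eventually_elim simp
    moreover have "(\<lambda>x. indicator (- ball 0 R) x *\<^sub>R g x) \<in> borel_measurable lborel"
      using g(1) by measurable
    ultimately show ?thesis
      using R f t by (intro weighted_Lp_integral_le_of_Lp_rho_norm_le) auto
  qed
  then show ?thesis
    by blast
qed

lemma weighted_Lp_translates_if_Lp_rho_translates:
  assumes borel_versions: "\<And>f. f \<in> F \<Longrightarrow> \<exists>g\<in>borel_measurable lborel. AE x in lborel. f x = g x"
    and translates: "\<forall>e>0. \<exists>r>0. \<forall>f\<in>F. \<forall>y\<in>ball 0 r. Lp_rho_norm p \<rho> (\<lambda>x. transl y f x - f x) \<le> ennreal e"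
    and t: "0 < t"
  shows "\<exists>r>0. \<forall>f\<in>F. \<forall>y\<in>ball 0 r. weighted_Lp_integral W' p (\<lambda>x. f (x - y) - f x) \<le> ennreal t"
proof -
  have "0 < (t / C powr p) powr (1 / p)"
    using C_pos t by simp
  from translates[rule_format, OF this] obtain r where r: "0 < r"
    "\<forall>f\<in>F. \<forall>y\<in>ball 0 r. Lp_rho_norm p \<rho> (\<lambda>x. f (x - y) - f x) \<le> ennreal ((t / C powr p) powr (1 / p))"
    unfolding transl_def by blast
  have "weighted_Lp_integral W' p (\<lambda>x. f (x - y) - f x) \<le> ennreal t" if f: "f \<in> F" and y: "y \<in> ball 0 r" for f y
  proof -
    obtain g where g: "g \<in> borel_measurable lborel" "AE x in lborel. f x = g x"
      using borel_versions[OF f] by blast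
    have "AE x in lborel. f (x - y) - f x = g (x - y) - g x"
      using AE_lborel_translate[OF g(2), of y] g(2) by eventually_elim simp
    moreover have "(\<lambda>x. g (x - y) - g x) \<in> borel_measurable lborel"
      using g(1) by measurable
    ultimately show ?thesis
      using r(2) f y t by (intro weighted_Lp_integral_le_of_Lp_rho_norm_le) auto
  qed
  then show ?thesis
    using r(1) by blast
qed

lemma totally_bounded_Lp_rho_if_weighted_nets:
  assumes nets: "\<And>t. 0 < t \<Longrightarrow> \<exists>N. finite N \<and> (\<forall>G\<in>N. G \<in> borel_measurable lborel \<and> weighted_Lp_integral W' p G < \<infinity>) \<and>
      (\<forall>f\<in>F. \<exists>G\<in>N. weighted_Lp_integral W' p (\<lambda>x. f x - G x) \<le> ennreal t)"
  shows "totally_bounded_Lp_rho p \<rho> F"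
  unfolding totally_bounded_Lp_rho_def
proof (intro allI impI)
  fix e :: real
  assume e: "0 < e"
  obtain N where N: "finite N" "\<forall>G\<in>N. G \<in> borel_measurable lborel \<and> weighted_Lp_integral W' p G < \<infinity>"
    "\<forall>f\<in>F. \<exists>G\<in>N. weighted_Lp_integral W' p (\<lambda>x. f x - G x) \<le> ennreal (e powr p / 2)"
    using nets[of "e powr p / 2"] e by auto
  show "\<exists>K. finite K \<and> K \<subseteq> Lp_rho p \<rho> \<and> (\<forall>f\<in>F. \<exists>g\<in>K. Lp_rho_norm p \<rho> (\<lambda>x. f x - g x) < ennreal e)"
  proof (intro exI[of _ N] conjI ballI subsetI)
    fix G
    assume "G \<in> N"
    then have "G \<in> borel_measurable lebesgue" "weighted_Lp_integral W' p G < \<infinity>"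
      using N(2) by (auto intro: measurable_completion)
    then show "G \<in> Lp_rho p \<rho>"
      using nn_integral_rho_le_weighted_Lp_integral[of G] by (simp add: Lp_rho_def)
  next
    fix f
    assume "f \<in> F"
    then obtain G where G: "G \<in> N" "weighted_Lp_integral W' p (\<lambda>x. f x - G x) \<le> ennreal (e powr p / 2)"
      using N(3) by blast
    have "(\<integral>\<^sup>+x. ennreal (\<rho> x (f x - G x) powr p) \<partial>lebesgue) \<le> ennreal (e powr p / 2)"
      using nn_integral_rho_le_weighted_Lp_integral G(2) by (rule order_trans)
    also have "\<dots> < ennreal (e powr p)"
      using e by (intro ennreal_lessI) auto
    finally have "Lp_rho_norm p \<rho> (\<lambda>x. f x - G x) < ennreal e"
      using e p_pos by (intro Lp_rho_norm_less_of_nn_integral_rho_less) auto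
    then show "\<exists>g\<in>N. Lp_rho_norm p \<rho> (\<lambda>x. f x - g x) < ennreal e"
      using G(1) by blast
  qed (use N(1) in simp)
qed

end

theorem corollary3p3:
  fixes p :: real
    and \<rho> :: "real^'n \<Rightarrow> complex^'d \<Rightarrow> real"
    and W :: "real^'n \<Rightarrow> complex^'d^'d"
    and F :: "(real^'n \<Rightarrow> complex^'d) set"
  assumes p: "1 \<le> p"
    and norms: "\<forall>x. is_cnorm (\<rho> x)"
    and rho_meas: "\<forall>f::real^'n \<Rightarrow> complex^'d. f \<in> borel_measurable lebesgue \<longrightarrow>
                     (\<lambda>x. \<rho> x (f x)) \<in> borel_measurable lebesgue"
    and W_pd: "\<forall>x. pos_def_sa (W x)"
    and W_equiv: "\<forall>x v. \<rho> x v \<le> norm (W x *v v) \<and> norm (W x *v v) \<le> sqrt (real CARD('d)) * \<rho> x v"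
    and W_weight: "invertible_matrix_weight W"
    and W_p: "loc_integrable (\<lambda>x. op_norm (W x) powr p)"
    and F_sub: "F \<subseteq> Lp_rho p \<rho>"
    and a: "\<exists>C. \<forall>f\<in>F. Lp_rho_norm p \<rho> f \<le> C \<and> C < \<infinity>"
    and b: "\<forall>e>0. \<exists>R0. \<forall>R\<ge>R0. \<forall>f\<in>F.
              Lp_rho_norm p \<rho> (\<lambda>x. indicator (- ball 0 R) x *\<^sub>R f x) \<le> ennreal e"
    and c: "\<forall>e>0. \<exists>r>0. \<forall>f\<in>F. \<forall>y\<in>ball 0 r.
              Lp_rho_norm p \<rho> (\<lambda>x. transl y f x - f x) \<le> ennreal e"
  shows "totally_bounded_Lp_rho p \<rho> F"
proof -
  have p0: "0 < p"
    using p by simp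
  obtain W' where W': "W' \<in> borel_measurable lborel" "AE x in lborel. W x = W' x"
    "AE x in lborel. \<forall>v. v \<noteq> 0 \<longrightarrow> W' x *v v \<noteq> 0" "loc_integrable (\<lambda>x. op_norm (W' x) powr p)"
    using matrix_weight_borel_version[OF _ W_pd W_p] W_weight unfolding invertible_matrix_weight_def by blast
  interpret rho_weight_comparison \<rho> W W' "sqrt (real CARD('d))" p
    using W_equiv W'(2) p0 rho_meas by unfold_locales auto
  have borel_versions: "\<exists>g\<in>borel_measurable lborel. AE x in lborel. f x = g x" if "f \<in> F" for f
    using F_sub that by (intro completion_ex_borel_measurable_euclidean) (auto simp: Lp_rho_def)
  obtain B where B: "0 \<le> B" "\<And>f. f \<in> F \<Longrightarrow> weighted_Lp_integral W' p f \<le> ennreal B"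
    using weighted_Lp_bounded_if_Lp_rho_bounded[OF borel_versions a] by blast
  show ?thesis
    using weighted_Lp_finite_net[OF W'(1,3,4) p borel_versions B(2,1)
        weighted_Lp_tails_if_Lp_rho_tails[OF borel_versions b] weighted_Lp_translates_if_Lp_rho_translates[OF borel_versions c]]
    by (rule totally_bounded_Lp_rho_if_weighted_nets)
qed

end
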